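(* Let $k\geq 2$ be an integer, $n=rk$ with $r>2$ an integer, and $e=\lceil r/2\rceil-1$. Let $\mathcal{C}_i=\{\alpha U_i\mid \alpha\in\mathbb{F}_{q^n}^*\}$. Then the subspace code $\mathcal{C}=\bigcup_{i=1}^{e(q-1)(q^k-1)}\mathcal{C}_i$ is a cyclic constant dimension subspace code with cardinality $e(q^k-1)(q^n-1)$ and minimum distance $2k-2$.
   Context: $q$ is a prime power, $\mathbb{F}_{q^n}$ is the extension of degree $n$ of $\mathbb{F}_q$, viewed as an $n$-dimensional $\mathbb{F}_q$-vector space. The subspace distance is $d(U,V)=\dim U+\dim V-2\dim(U\cap V)$; a constant dimension subspace code is a set of $k$-dimensional $\mathbb{F}_q$-subspaces of $\mathbb{F}_{q^n}$, and it is cyclic if it is a union of orbits $\{\alpha U\mid \alpha\in\mathbb{F}_{q^n}^*\}$. Let $\xi$ be a primitive element of $\mathbb{F}_{q^k}$ and $G=\mathbb{F}_{q^k}^*/\langle\xi^{q-1}\rangle$, a cyclic group of order $q-1$ (elements of $G$ are used via fixed coset representatives in $\mathbb{F}_{q^k}^*$). Let $\gamma$ be a root of an irreducible polynomial of degree $r$ over $\mathbb{F}_{q^k}$ (so $1,\gamma,\dots,\gamma^{r-1}$ are linearly independent over $\mathbb{F}_{q^k}$ and $\mathbb{F}_{q^k}(\gamma)=\mathbb{F}_{q^n}$). The $e(q-1)(q^k-1)$ subspaces $U_i=\{u+(\tau_i u^q+u)\delta_i\gamma^{l_i}\mid u\in\mathbb{F}_{q^k}\}$, $1\le i\le e(q-1)(q^k-1)$,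 are indexed by all triples $(\tau_i,\delta_i,l_i)$ with $\tau_i\in G$, $\delta_i\in\mathbb{F}_{q^k}^*$, $1\leq l_i\leq e$. *)

theory Defs
  imports "HOL-Computational_Algebra.Polynomial"
begin

text \<open>The subfield of order q^m of a finite field (as the set of roots of x^(q^m) - x).
  In particular subfld q 1 is F_q and subfld q k is F_(q^k).\<close>
definition subfld :: "nat \<Rightarrow> nat \<Rightarrow> 'a::field set" where
  "subfld q m = {x. x ^ (q ^ m) = x}"

definition fq_span :: "nat \<Rightarrow> 'a::field set \<Rightarrow> 'a set" where
  "fq_span q B = {(\<Sum>b\<in>B. c b * b) | c. \<forall>b\<in>B. c b \<in> subfld q 1}"

definition fq_indep :: "nat \<Rightarrow> 'a::field set \<Rightarrow> bool" where
  "fq_indep q B = (\<forall>c. (\<forall>b\<in>B. c b \<in> subfld q 1) \<and> (\<Sum>b\<in>B. c b * b) = 0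
                       \<longrightarrow> (\<forall>b\<in>B. c b = 0))"

definition fq_subspace :: "nat \<Rightarrow> 'a::field set \<Rightarrow> bool" where
  "fq_subspace q U = (0 \<in> U \<and> (\<forall>x\<in>U. \<forall>y\<in>U. x + y \<in> U)
                       \<and> (\<forall>c\<in>subfld q 1. \<forall>x\<in>U. c * x \<in> U))"

definition fq_dim :: "nat \<Rightarrow> 'a::field set \<Rightarrow> nat" where
  "fq_dim q U = (SOME d. \<exists>B. B \<subseteq> U \<and> finite B \<and> card B = d \<and> fq_indep q B \<and> fq_span q B = U)"

definition subspace_dist :: "nat \<Rightarrow> 'a::field set \<Rightarrow> 'a set \<Rightarrow> int" where
  "subspace_dist q U V = int (fq_dim q U) + int (fq_dim q V) - 2 * int (fq_dim q (U \<inter> V))"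

definition orbit :: "'a::field set \<Rightarrow> 'a set set" where
  "orbit U = {(\<lambda>x. \<alpha> * x) ` U | \<alpha>. \<alpha> \<noteq> 0}"

definition poly_over :: "'a::field set \<Rightarrow> 'a poly \<Rightarrow> bool" where
  "poly_over S f = (\<forall>i. coeff f i \<in> S)"

definition irreducible_over :: "'a::field set \<Rightarrow> 'a poly \<Rightarrow> bool" where
  "irreducible_over S f = (poly_over S f \<and> degree f > 0 \<and>
     (\<forall>g h. poly_over S g \<and> poly_over S h \<and> f = g * h \<longrightarrow> degree g = 0 \<or> degree h = 0))"

definition U_sub :: "nat \<Rightarrow> nat \<Rightarrow> 'a::field \<Rightarrow> 'a \<Rightarrow> 'a \<Rightarrow> nat \<Rightarrow> 'a set" where
  "U_sub q k \<gamma> \<tau> \<delta> l = {u + (\<tau> * u ^ q + u) * \<delta> * \<gamma> ^ l | u. u \<in> subfld q k}"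

end

theory Submission
  imports Defs "HOL-Number_Theory.Cong" "HOL-Library.FuncSet"
begin

text \<open>Each U_sub q k \<gamma> \<tau> \<delta> l = {u + (\<tau> u^q + u) \<delta> \<gamma>^l | u \<in> K}, K = F_(q^k), is the image
  of K under an injective F_q-linear map, hence a k-dimensional subspace, and the code is a
  union of orbits under multiplication, hence cyclic. Everything else rests on one fact: if
  \<alpha> U_sub \<tau>1 \<delta>1 l1 and U_sub \<tau>2 \<delta>2 l2 share two F_q-independent vectors, then the triples
  coincide and \<alpha> \<in> F_q. Cross-multiplying the two parametrisations gives a relation
  a + b \<gamma>^l1 + c \<gamma>^l2 + d \<gamma>^(l1+l2) = 0 with coefficients in K; as l1 + l2 \<le> 2e < r and
  1, \<gamma>, ..., \<gamma>^(r-1) are K-independent, comparing coefficients yields l1 = l2, \<delta>1 = \<delta>2 and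
  \<tau>1 = \<tau>2 \<mu>^(q-1) for some \<mu> \<in> K, so \<tau>1 = \<tau>2 since T contains one representative of each
  coset of the subgroup generated by \<xi>^(q-1). Consequently distinct codewords meet in at most
  an F_q-line (distance \<ge> 2k - 2), the orbits are pairwise disjoint of size (q^n-1)/(q-1)
  (the cardinality), and two explicit codewords sharing a line attain the distance.\<close>

text \<open>The library version CHAR_dvd_CARD lives in HOL-Number_Theory.Residues, whose HOL-Algebra
  imports would shadow the polynomial constants (coeff, degree, monom) used here.\<close>
lemma CHAR_dvd_card: "CHAR('a::{field,finite}) dvd card (UNIV :: 'a set)"
proof -
  define c where "c = CHAR('a)"
  have c_pos: "c > 0"
    unfolding c_def using finite_imp_CHAR_pos[where ?'a='a] by auto
  define R where "R = {(x::'a, y). \<exists>i. y = x + of_nat i}"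
  have R_equiv: "equiv UNIV R"
  proof (rule equivI)
    show "refl R"
      unfolding R_def refl_on_def by (auto intro: exI[of _ 0])
    show "sym R"
      unfolding R_def sym_def
    proof clarify
      fix x :: 'a and i
      have "of_nat i + of_nat ((c - 1) * i) = (of_nat (c * i) :: 'a)"
        using c_pos by (simp flip: of_nat_add) (simp add: algebra_simps diff_mult_distrib)
      also have "\<dots> = 0"
        by (simp add: c_def)
      finally show "\<exists>j. x = x + of_nat i + of_nat j"
        by (metis add.assoc add_0_right)
    qed
    show "trans R"
      unfolding R_def trans_def by clarify (metis add.assoc of_nat_add)
  qed auto
  have class_card: "c dvd card X" if X_class: "X \<in> UNIV // R" for X
  proof -
    obtain x where X: "X = R `` {x}"
      using X_class by (auto elim: quotientE)
    have of_nat_mod: "(of_nat i :: 'a) = of_nat (i mod c)" for i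
      by (simp add: of_nat_eq_iff_cong_CHAR c_def cong_def)
    have "X = (\<lambda>i. x + of_nat i) ` {..<c}"
      using X c_pos of_nat_mod unfolding R_def by auto (metis lessThan_iff mod_less_divisor rev_image_eqI)
    moreover have "inj_on (\<lambda>i. x + (of_nat i :: 'a)) {..<c}"
      by (intro inj_onI) (auto simp: of_nat_eq_iff_cong_CHAR cong_def c_def)
    ultimately show ?thesis
      by (simp add: card_image)
  qed
  show ?thesis
    unfolding c_def[symmetric] by (rule equiv_imp_dvd_card[OF finite_UNIV R_equiv class_card])
qed

lemma CHAR_eq_of_card_eq_prime_power:
  assumes p: "prime p" and card: "card (UNIV :: 'a::{field,finite} set) = p ^ N"
  shows "CHAR('a) = p"
proof -
  have "prime CHAR('a)"
    using prime_CHAR_semidom[where ?'a='a] finite_imp_CHAR_pos[where ?'a='a] by auto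
  moreover have "CHAR('a) dvd p ^ N"
    using CHAR_dvd_card[where ?'a='a] card by simp
  ultimately show ?thesis
    using p prime_dvd_power primes_dvd_imp_eq by blast
qed

lemma card_roots_binomial_le:
  fixes c d :: "'a::idom"
  assumes "c \<noteq> 0" "N \<ge> 2"
  shows "card {x. c * x ^ N + d * x = 0} \<le> N"
proof -
  define P where "P = Polynomial.monom c N + Polynomial.monom d 1"
  have "coeff P N = c"
    using assms by (simp add: P_def coeff_monom)
  hence "P \<noteq> 0"
    using assms by auto
  have "{x. c * x ^ N + d * x = 0} = {x. poly P x = 0}"
    by (simp add: P_def poly_monom)
  also have "card \<dots> \<le> degree P"
    by (rule card_poly_roots_bound[OF \<open>P \<noteq> 0\<close>])
  also have "degree P \<le> N"
    unfolding P_def using assms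
    by (intro degree_add_le) (auto intro: order.trans[OF degree_monom_le])
  finally show ?thesis .
qed

lemma diff_one_dvd_power_diff_one:
  assumes "(q::nat) \<ge> 1"
  shows "q - 1 dvd q ^ k - 1"
proof -
  have "int (q ^ k - 1) = (int q - 1) * (\<Sum>i<k. int q ^ i)"
    using power_diff_1_eq[of "int q" k] assms by (simp add: of_nat_diff)
  hence "int (q - 1) dvd int (q ^ k - 1)"
    using assms by (simp add: of_nat_diff)
  thus ?thesis
    by (simp only: int_dvd_int_iff)
qed

lemma card_eq_card_image_mult_fibre:
  assumes "finite A" "\<And>x. x \<in> A \<Longrightarrow> card {y \<in> A. f y = f x} = c"
  shows "card A = card (f ` A) * c"
proof -
  have A_fibres: "A = (\<Union>z\<in>f ` A. {y \<in> A. f y = z})"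
    by auto
  have "card A = (\<Sum>z\<in>f ` A. card {y \<in> A. f y = z})"
    by (subst A_fibres, rule card_UN_disjoint) (use assms(1) in auto)
  also have "\<dots> = (\<Sum>z\<in>f ` A. c)"
    using assms(2) by (intro sum.cong) auto
  finally show ?thesis
    by simp
qed

lemma degree_pos_if_poly_root:
  fixes p :: "'a::comm_semiring_0 poly"
  assumes "poly p x = 0" "p \<noteq> 0"
  shows "degree p > 0"
proof (rule ccontr)
  assume "\<not> degree p > 0"
  hence "poly p x = poly [:coeff p 0:] x"
    by (simp only: degree_0_id not_gr0)
  moreover have "coeff p 0 \<noteq> 0"
    using assms(2) \<open>\<not> degree p > 0\<close> leading_coeff_0_iff[of p] by simp
  ultimately show False
    using assms(1) by simp
qed

lemma image_mult_image_mult: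
  "(\<lambda>x. a * x) ` (\<lambda>x. b * x) ` U = (\<lambda>x. (a * b) * (x::'a::semigroup_mult)) ` U"
  by (simp add: image_image mult.assoc)

lemma mult_diff_mult_expand:
  fixes a b c d a' b' c' d' g h :: "'a::comm_ring"
  shows "(a + b * g) * (c + d * h) - (a' + b' * g) * (c' + d' * h)
    = (a * c - a' * c') + (b * c - b' * c') * g + (a * d - a' * d') * h + (b * d - b' * d') * (g * h)"
  by (simp add: algebra_simps)

lemma card_image_mult:
  "(\<alpha>::'a::field) \<noteq> 0 \<Longrightarrow> card ((\<lambda>x. \<alpha> * x) ` U) = card U"
  by (subst card_image) (auto intro: inj_onI)

lemma subfld_one: "1 \<in> subfld q j"
  by (simp add: subfld_def)

lemma subfld_mult: "x \<in> subfld q j \<Longrightarrow> y \<in> subfld q j \<Longrightarrow> x * y \<in> subfld q j"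
  by (simp add: subfld_def power_mult_distrib)

lemma subfld_inverse: "(x::'a::field) \<in> subfld q j \<Longrightarrow> inverse x \<in> subfld q j"
  by (simp add: subfld_def power_inverse)

lemma subfld_divide:
  "(x::'a::field) \<in> subfld q j \<Longrightarrow> y \<in> subfld q j \<Longrightarrow> x / y \<in> subfld q j"
  by (simp add: divide_inverse subfld_mult subfld_inverse)

lemma subfld_power: "x \<in> subfld q j \<Longrightarrow> x ^ i \<in> subfld q j"
  by (induction i) (auto simp: subfld_one subfld_mult)

lemma subfld_1_subset: "subfld q 1 \<subseteq> subfld q j"
proof
  fix x :: 'a assume "x \<in> subfld q 1"
  hence "x ^ q = x"
    by (simp add: subfld_def)
  hence "x ^ (q ^ i) = x" for i
    by (induction i) (simp_all add: power_mult mult.commute[of q])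
  thus "x \<in> subfld q j"
    by (simp add: subfld_def)
qed

definition fq_indep_pair :: "nat \<Rightarrow> 'a::field \<Rightarrow> 'a \<Rightarrow> bool" where
  "fq_indep_pair q x y \<longleftrightarrow>
     (\<forall>c d. c \<in> subfld q 1 \<and> d \<in> subfld q 1 \<and> c * x + d * y = 0 \<longrightarrow> c = 0 \<and> d = 0)"

lemma fq_indep_pair_mult:
  "a \<noteq> 0 \<Longrightarrow> fq_indep_pair q x y \<Longrightarrow> fq_indep_pair q (a * x) (a * y)"
  unfolding fq_indep_pair_def
proof (intro allI impI)
  fix c d
  assume "a \<noteq> 0" and indep: "\<forall>c d. c \<in> subfld q 1 \<and> d \<in> subfld q 1 \<and> c * x + d * y = 0
      \<longrightarrow> c = 0 \<and> d = 0"
    and cd: "c \<in> subfld q 1 \<and> d \<in> subfld q 1 \<and> c * (a * x) + d * (a * y) = 0"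
  have "a * (c * x + d * y) = 0"
    using cd by (simp add: algebra_simps)
  hence "c * x + d * y = 0"
    using \<open>a \<noteq> 0\<close> by simp
  thus "c = 0 \<and> d = 0"
    using indep cd by blast
qed

lemma fq_subspace_image_mult:
  assumes "fq_subspace q U"
  shows "fq_subspace q ((\<lambda>x. \<alpha> * x) ` U)"
proof -
  have U: "0 \<in> U" "\<forall>x\<in>U. \<forall>y\<in>U. x + y \<in> U" "\<forall>c\<in>subfld q 1. \<forall>x\<in>U. c * x \<in> U"
    using assms unfolding fq_subspace_def by auto
  have "\<alpha> * x + \<alpha> * y \<in> (\<lambda>x. \<alpha> * x) ` U" if "x \<in> U" "y \<in> U" for x y
    using U(2) that by (intro image_eqI[where x="x + y"]) (auto simp: distrib_left)
  moreover have "c * (\<alpha> * x) \<in> (\<lambda>x. \<alpha> * x) ` U" if "c \<in> subfld q 1" "x \<in> U" for c x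
    using U(3) that by (intro image_eqI[where x="c * x"]) (auto simp: mult.left_commute)
  ultimately show ?thesis
    using U(1) unfolding fq_subspace_def by (auto intro: image_eqI[where x=0])
qed

lemma fq_subspace_Int:
  "fq_subspace q U \<Longrightarrow> fq_subspace q V \<Longrightarrow> fq_subspace q (U \<inter> V)"
  unfolding fq_subspace_def by auto

locale frobenius_power =
  fixes q m :: nat
  assumes q_eq_CHAR_power: "q = CHAR('a::{field,finite}) ^ m" and m_pos: "m > 0"
begin

abbreviation Fq :: "'a set" where "Fq \<equiv> subfld q 1"

lemma CHAR_prime: "prime CHAR('a)"
  using prime_CHAR_semidom[where ?'a='a] finite_imp_CHAR_pos[where ?'a='a] by auto

lemma q_ge_2: "q \<ge> 2"
proof -
  have "CHAR('a) ^ 1 \<le> q"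
    unfolding q_eq_CHAR_power using m_pos prime_gt_0_nat[OF CHAR_prime]
    by (intro power_increasing) auto
  thus ?thesis
    using prime_ge_2_nat[OF CHAR_prime] by simp
qed

lemma q_power_eq_CHAR_power: "q ^ j = CHAR('a) ^ (m * j)"
  by (simp add: q_eq_CHAR_power power_mult)

lemma frobenius_add: "(x + y :: 'a) ^ (q ^ j) = x ^ (q ^ j) + y ^ (q ^ j)"
  by (rule freshmans_dream'[OF CHAR_prime q_power_eq_CHAR_power])

lemma frobenius_sum: "(sum f A :: 'a) ^ (q ^ j) = (\<Sum>i\<in>A. f i ^ (q ^ j))"
  by (rule freshmans_dream_sum'[OF CHAR_prime q_power_eq_CHAR_power])

lemma frobenius_zero: "(0::'a) ^ (q ^ j) = 0"
  using q_ge_2 by simp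

lemma frobenius_uminus: "(- x :: 'a) ^ (q ^ j) = - (x ^ (q ^ j))"
  using frobenius_add[of x "- x" j] frobenius_zero[of j] by (simp add: eq_neg_iff_add_eq_0 add.commute)

lemma frobenius_diff: "(x - y :: 'a) ^ (q ^ j) = x ^ (q ^ j) - y ^ (q ^ j)"
  using frobenius_add[of x "- y" j] frobenius_uminus[of y j] by simp

lemma frobenius_add_q: "(x + y :: 'a) ^ q = x ^ q + y ^ q"
  using frobenius_add[of x y 1] by simp

lemma frobenius_diff_q: "(x - y :: 'a) ^ q = x ^ q - y ^ q"
  using frobenius_diff[of x y 1] by simp

lemma subfld_zero: "(0::'a) \<in> subfld q j"
  by (simp add: subfld_def frobenius_zero)

lemma subfld_add: "(x::'a) \<in> subfld q j \<Longrightarrow> y \<in> subfld q j \<Longrightarrow> x + y \<in> subfld q j"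
  by (simp add: subfld_def frobenius_add)

lemma subfld_uminus: "(x::'a) \<in> subfld q j \<Longrightarrow> - x \<in> subfld q j"
  by (simp add: subfld_def frobenius_uminus)

lemma subfld_diff: "(x::'a) \<in> subfld q j \<Longrightarrow> y \<in> subfld q j \<Longrightarrow> x - y \<in> subfld q j"
  by (simp add: subfld_def frobenius_diff)

lemma card_subfld_le: "j > 0 \<Longrightarrow> card (subfld q j :: 'a set) \<le> q ^ j"
proof -
  assume "j > 0"
  hence "q ^ j \<ge> 2"
    using q_ge_2 power_increasing[of 1 j q] by simp
  moreover have "(subfld q j :: 'a set) = {x. 1 * x ^ (q ^ j) + (- 1) * x = 0}"
    by (auto simp: subfld_def)
  ultimately show ?thesis
    using card_roots_binomial_le[of "1::'a" "q ^ j" "- 1"] by simp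
qed

abbreviation frob :: "nat \<Rightarrow> 'a \<Rightarrow> 'a" where "frob j x \<equiv> x ^ (q ^ j)"

lemma coeff_map_poly_frob: "coeff (map_poly (frob j) g) i = frob j (coeff g i)"
  by (simp add: coeff_map_poly frobenius_zero)

lemma map_poly_frob_add: "map_poly (frob j) (a + b) = map_poly (frob j) a + map_poly (frob j) b"
  by (rule poly_eqI) (simp add: coeff_map_poly_frob frobenius_add)

lemma map_poly_frob_mult: "map_poly (frob j) (a * b) = map_poly (frob j) a * map_poly (frob j) b"
  by (rule poly_eqI) (simp add: coeff_map_poly_frob coeff_mult frobenius_sum power_mult_distrib)

lemma poly_over_subfld_iff: "poly_over (subfld q j) g \<longleftrightarrow> map_poly (frob j) g = g"
  by (auto simp: poly_over_def subfld_def poly_eq_iff coeff_map_poly_frob)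

text \<open>Division with remainder commutes with the Frobenius map, which fixes exactly the
  polynomials over the subfield; uniqueness of quotient and remainder does the rest.\<close>
lemma poly_over_subfld_div_mod:
  fixes f g :: "'a poly"
  assumes f: "poly_over (subfld q j) f" and g: "poly_over (subfld q j) g" and "degree g > 0"
  shows "poly_over (subfld q j) (f div g)" "poly_over (subfld q j) (f mod g)"
proof -
  define h where "h = f div g"
  define rm where "rm = f mod g"
  have "g \<noteq> 0"
    using \<open>degree g > 0\<close> by auto
  have f_eq: "f = h * g + rm"
    by (simp add: h_def rm_def)
  have rm_deg: "degree rm < degree g"
    using degree_mod_less[OF \<open>g \<noteq> 0\<close>, of f] \<open>degree g > 0\<close> by (auto simp: rm_def)
  define h' where "h' = map_poly (frob j) h"
  define rm' where "rm' = map_poly (frob j) rm"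
  have "map_poly (frob j) f = h' * map_poly (frob j) g + rm'"
    unfolding h'_def rm'_def by (subst f_eq) (simp only: map_poly_frob_add map_poly_frob_mult)
  hence f_eq': "f = h' * g + rm'"
    using f g by (simp add: poly_over_subfld_iff)
  have rm'_deg: "degree rm' < degree g"
    using map_poly_degree_leq[of "frob j" rm] rm_deg by (simp add: rm'_def)
  have "h = h'"
  proof (rule ccontr)
    assume "h \<noteq> h'"
    hence "degree ((h - h') * g) \<ge> degree g"
      using \<open>g \<noteq> 0\<close> by (simp add: degree_mult_eq)
    moreover have "(h - h') * g = rm' - rm"
      using f_eq f_eq' by (simp add: algebra_simps)
    moreover have "degree (rm' - rm) < degree g"
      using degree_diff_le_max[of rm' rm] rm_deg rm'_deg by simp
    ultimately show False
      by simp
  qed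
  hence "rm = rm'"
    using f_eq f_eq' by simp
  with \<open>h = h'\<close> show "poly_over (subfld q j) (f div g)" "poly_over (subfld q j) (f mod g)"
    unfolding poly_over_subfld_iff h_def rm_def h'_def rm'_def by simp_all
qed

lemma irreducible_over_root_degree_le:
  fixes f g :: "'a poly"
  assumes f: "irreducible_over (subfld q j) f" "poly f \<gamma> = 0"
  shows "poly_over (subfld q j) g \<Longrightarrow> poly g \<gamma> = 0 \<Longrightarrow> g \<noteq> 0 \<Longrightarrow> degree f \<le> degree g"
proof (induction "degree g" arbitrary: g rule: less_induct)
  case less
  have f_over: "poly_over (subfld q j) f" and "degree f > 0"
    and f_irr: "\<And>g h. poly_over (subfld q j) g \<Longrightarrow> poly_over (subfld q j) h \<Longrightarrow> f = g * h
      \<Longrightarrow> degree g = 0 \<or> degree h = 0"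
    using f(1) unfolding irreducible_over_def by auto
  have "degree g > 0"
    using degree_pos_if_poly_root less.prems(2,3) .
  define h where "h = f div g"
  define rm where "rm = f mod g"
  have over: "poly_over (subfld q j) h" "poly_over (subfld q j) rm"
    using poly_over_subfld_div_mod[OF f_over less.prems(1) \<open>degree g > 0\<close>]
    by (simp_all add: h_def rm_def)
  have f_eq: "f = h * g + rm"
    by (simp add: h_def rm_def)
  have "poly f \<gamma> = poly h \<gamma> * poly g \<gamma> + poly rm \<gamma>"
    by (subst f_eq) simp
  hence "poly rm \<gamma> = 0"
    using f(2) less.prems(2) by simp
  show ?case
  proof (cases "rm = 0")
    case False
    hence "degree rm < degree g"
      using degree_mod_less[OF less.prems(3), of f] unfolding rm_def by blast
    thus ?thesis
      using less.hyps[OF _ over(2) \<open>poly rm \<gamma> = 0\<close> False] by simp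
  next
    case True
    hence "f = h * g"
      using f_eq by simp
    moreover have "h \<noteq> 0"
      using \<open>f = h * g\<close> \<open>degree f > 0\<close> by auto
    ultimately show ?thesis
      using f_irr[OF over(1) less.prems(1)] \<open>degree g > 0\<close> less.prems(3)
      by (simp add: degree_mult_eq)
  qed
qed

end

locale fq_vector_space = frobenius_power +
  assumes card_Fq: "card (subfld q 1 :: 'a::{field,finite} set) = q"
begin

lemma card_fq_span:
  assumes "fq_indep q (B :: 'a set)"
  shows "card (fq_span q B) = q ^ card B"
proof -
  define g where "g c = (\<Sum>b\<in>B. c b * b)" for c
  define P where "P = PiE B (\<lambda>_. Fq)"
  have "fq_span q B = g ` P"
  proof
    show "fq_span q B \<subseteq> g ` P"
    proof
      fix x assume "x \<in> fq_span q B"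
      then obtain c where c: "\<forall>b\<in>B. c b \<in> Fq" "x = g c"
        unfolding fq_span_def g_def by blast
      hence "restrict c B \<in> P" "g (restrict c B) = x"
        by (simp_all add: P_def g_def)
      thus "x \<in> g ` P"
        by blast
    qed
    show "g ` P \<subseteq> fq_span q B"
      unfolding fq_span_def P_def g_def by (auto simp: PiE_iff)
  qed
  moreover have "inj_on g P"
  proof (rule inj_onI)
    fix c c' assume cc: "c \<in> P" "c' \<in> P" "g c = g c'"
    have "(\<Sum>b\<in>B. (c b - c' b) * b) = 0"
      using cc(3) by (simp add: g_def left_diff_distrib sum_subtractf)
    moreover have "\<forall>b\<in>B. c b - c' b \<in> Fq"
      using cc by (auto simp: P_def PiE_iff intro: subfld_diff)
    ultimately have "\<forall>b\<in>B. c b - c' b = 0"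
      using assms[unfolded fq_indep_def, rule_format, of "\<lambda>b. c b - c' b"] by blast
    thus "c = c'"
      using cc unfolding P_def by (intro PiE_ext) auto
  qed
  ultimately have "card (fq_span q B) = card P"
    by (simp add: card_image)
  also have "\<dots> = q ^ card B"
    by (simp only: P_def card_PiE[OF finite] prod_constant card_Fq)
  finally show ?thesis .
qed

lemma fq_subspace_sum_mem:
  assumes W: "fq_subspace q (W :: 'a set)" and "B \<subseteq> W" and "\<forall>b\<in>B. c b \<in> Fq"
  shows "(\<Sum>b\<in>B. c b * b) \<in> W"
  using finite[of B] assms(2,3)
  by (induction B rule: finite_induct) (use W in \<open>simp_all add: fq_subspace_def\<close>)

lemma fq_span_superset: "(w::'a) \<in> B \<Longrightarrow> w \<in> fq_span q B"
proof -
  assume "w \<in> B"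
  define c where "c b = (if b = w then 1 else 0 :: 'a)" for b
  have "(\<Sum>b\<in>B. c b * b) = (\<Sum>b\<in>B. if b = w then b else 0)"
    by (rule sum.cong) (auto simp: c_def)
  also have "\<dots> = w"
    using \<open>w \<in> B\<close> by (simp add: sum.delta')
  finally have "w = (\<Sum>b\<in>B. c b * b)" ..
  moreover have "\<forall>b\<in>B. c b \<in> Fq"
    by (simp add: c_def subfld_zero subfld_one)
  ultimately show ?thesis
    unfolding fq_span_def by blast
qed

lemma fq_span_if_insert_dependent:
  assumes "fq_indep q (B :: 'a set)" "\<not> fq_indep q (insert w B)" "w \<notin> B"
  shows "w \<in> fq_span q B"
proof -
  obtain c where c: "\<forall>b\<in>insert w B. c b \<in> Fq"
      "c w * w + (\<Sum>b\<in>B. c b * b) = 0" "\<exists>b\<in>insert w B. c b \<noteq> 0"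
    using assms(2,3) unfolding fq_indep_def by auto
  have "c w \<noteq> 0"
    using c assms(1) unfolding fq_indep_def by auto
  define d where "d b = - c b / c w" for b
  have "(\<Sum>b\<in>B. d b * b) = - (\<Sum>b\<in>B. c b * b) / c w"
    by (simp add: d_def sum_divide_distrib sum_negf)
  also have "\<dots> = w"
    using c(2) \<open>c w \<noteq> 0\<close> by (simp add: add_eq_0_iff)
  finally have "(\<Sum>b\<in>B. d b * b) = w" .
  moreover have "\<forall>b\<in>B. d b \<in> Fq"
    using c(1) by (auto simp: d_def intro!: subfld_divide subfld_uminus)
  ultimately show ?thesis
    unfolding fq_span_def by blast
qed

lemma fq_basis_exists:
  assumes W: "fq_subspace q (W :: 'a set)"
  obtains B where "B \<subseteq> W" "fq_indep q B" "fq_span q B = W"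
proof -
  define S where "S = {B. B \<subseteq> W \<and> fq_indep q B}"
  have "{} \<in> S"
    by (simp add: S_def fq_indep_def)
  hence "Max (card ` S) \<in> card ` S"
    by (intro Max_in) auto
  then obtain B where "B \<in> S" and B_card: "card B = Max (card ` S)"
    by (metis imageE)
  have BW: "B \<subseteq> W" and B_indep: "fq_indep q B"
    using \<open>B \<in> S\<close> by (auto simp: S_def)
  have "W \<subseteq> fq_span q B"
  proof
    fix w assume "w \<in> W"
    show "w \<in> fq_span q B"
    proof (cases "w \<in> B")
      case False
      hence "card (insert w B) > Max (card ` S)"
        using B_card by simp
      hence "insert w B \<notin> S"
        using Max_ge[of "card ` S"] by fastforce
      hence "\<not> fq_indep q (insert w B)"
        using BW \<open>w \<in> W\<close> by (auto simp: S_def)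
      thus ?thesis
        using fq_span_if_insert_dependent B_indep False by blast
    qed (rule fq_span_superset)
  qed
  moreover have "fq_span q B \<subseteq> W"
    unfolding fq_span_def using fq_subspace_sum_mem[OF W BW] by blast
  ultimately show ?thesis
    using that BW B_indep by blast
qed

lemma card_fq_subspace:
  assumes W: "fq_subspace q (W :: 'a set)"
  shows "card W = q ^ fq_dim q W"
proof -
  obtain B where "B \<subseteq> W" "fq_indep q B" "fq_span q B = W"
    using fq_basis_exists[OF W] .
  hence "\<exists>d B. B \<subseteq> W \<and> finite B \<and> card B = d \<and> fq_indep q B \<and> fq_span q B = W"
    by auto
  hence "\<exists>B. B \<subseteq> W \<and> finite B \<and> card B = fq_dim q W \<and> fq_indep q B \<and> fq_span q B = W"
    unfolding fq_dim_def by (rule someI_ex)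
  then obtain B' where "card B' = fq_dim q W" "fq_indep q B'" "fq_span q B' = W"
    by blast
  thus ?thesis
    using card_fq_span by metis
qed

lemma fq_dim_eqI: "fq_subspace q (W :: 'a set) \<Longrightarrow> card W = q ^ d \<Longrightarrow> fq_dim q W = d"
  using card_fq_subspace q_ge_2 by (metis power_inject_exp Suc_1 Suc_le_lessD)

lemma fq_dim_le_1: "fq_subspace q (W :: 'a set) \<Longrightarrow> card W \<le> q \<Longrightarrow> fq_dim q W \<le> 1"
  using card_fq_subspace q_ge_2 by (metis power_le_imp_le_exp power_one_right Suc_1 Suc_le_lessD)

lemma card_fq_line:
  assumes "(w::'a) \<noteq> 0"
  shows "card ((\<lambda>c. c * w) ` Fq) = q"
proof -
  have "inj_on (\<lambda>c. c * w) Fq"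
    using assms by (auto intro: inj_onI)
  thus ?thesis
    using card_Fq by (simp add: card_image)
qed

lemma card_fq_subspace_le_if_no_indep_pair:
  assumes W: "fq_subspace q (W :: 'a set)" and dep: "\<forall>x\<in>W. \<forall>y\<in>W. \<not> fq_indep_pair q x y"
  shows "card W \<le> q"
proof (cases "W \<subseteq> {0}")
  case True
  hence "card W \<le> 1"
    using card_mono[of "{0}" W] by simp
  thus ?thesis
    using q_ge_2 by simp
next
  case False
  then obtain w where w: "w \<in> W" "w \<noteq> 0"
    by auto
  have "W \<subseteq> (\<lambda>c. c * w) ` Fq"
  proof
    fix x assume "x \<in> W"
    then obtain c d where cd: "c \<in> Fq" "d \<in> Fq" "c * x + d * w = 0" "\<not> (c = 0 \<and> d = 0)"
      using dep w unfolding fq_indep_pair_def by blast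
    hence "c \<noteq> 0"
      using w by auto
    hence "x = (- d / c) * w"
      using cd(3) by (simp add: field_simps eq_neg_iff_add_eq_0)
    moreover have "- d / c \<in> Fq"
      using cd by (intro subfld_divide subfld_uminus)
    ultimately show "x \<in> (\<lambda>c. c * w) ` Fq"
      by blast
  qed
  thus ?thesis
    using card_mono[of "(\<lambda>c. c * w) ` Fq" W] card_fq_line[OF w(2)] by simp
qed

lemma image_mult_fq_subspace:
  assumes W: "fq_subspace q (W :: 'a set)" and c: "c \<in> Fq" "c \<noteq> 0"
  shows "(\<lambda>x. c * x) ` W = W"
proof
  show "(\<lambda>x. c * x) ` W \<subseteq> W"
    using W c unfolding fq_subspace_def by auto
  show "W \<subseteq> (\<lambda>x. c * x) ` W"
  proof
    fix x assume "x \<in> W"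
    hence "inverse c * x \<in> W"
      using W subfld_inverse[OF c(1)] unfolding fq_subspace_def by blast
    moreover have "x = c * (inverse c * x)"
      using c by simp
    ultimately show "x \<in> (\<lambda>x. c * x) ` W"
      by blast
  qed
qed

end

locale cyclic_orbit_code =
  fixes q k r n e p m :: nat and \<xi> \<gamma> :: "'a::{field,finite}" and T :: "'a set"
  assumes p_prime: "prime p" and m_positive: "m > 0" and q_eq_p_power: "q = p ^ m"
    and k_ge_2: "k \<ge> 2" and r_gt_2: "r > 2" and n_eq: "n = r * k"
    and card_UNIV: "card (UNIV :: 'a set) = q ^ n"
    and e_eq: "e = nat \<lceil>real r / 2\<rceil> - 1"
    and xi_in_K: "\<xi> \<in> subfld q k" and xi_nonzero: "\<xi> \<noteq> 0"
    and xi_order: "\<forall>j. 0 < j \<and> j < q ^ k - 1 \<longrightarrow> \<xi> ^ j \<noteq> 1"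
    and T_subset: "T \<subseteq> subfld q k - {0}"
    and T_coset_reps:
      "\<forall>x \<in> subfld q k - {0}. \<exists>!\<tau>. \<tau> \<in> T \<and> (\<exists>j::nat. x = \<tau> * (\<xi> ^ (q - 1)) ^ j)"
    and gamma_root: "\<exists>f. irreducible_over (subfld q k) f \<and> degree f = r \<and> poly f \<gamma> = 0"
begin

abbreviation K :: "'a set" where "K \<equiv> subfld q k"

lemma CHAR_eq_p: "CHAR('a) = p"
  using CHAR_eq_of_card_eq_prime_power[OF p_prime, of "m * n"] card_UNIV
  by (simp add: q_eq_p_power power_mult)

sublocale frobenius_power q m
  using CHAR_eq_p q_eq_p_power m_positive by unfold_locales simp_all

lemma q_less_q_power_k: "q < q ^ k"
  using power_strict_increasing[of 1 k q] k_ge_2 q_ge_2 by simp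

lemma xi_power_order: "\<xi> ^ (q ^ k - 1) = 1"
proof -
  have "\<xi> * \<xi> ^ (q ^ k - 1) = \<xi> * 1"
    using xi_in_K q_ge_2 by (simp add: subfld_def flip: power_Suc)
  thus ?thesis
    using xi_nonzero by simp
qed

lemma inj_on_xi_power: "inj_on (\<lambda>j. \<xi> ^ j) {..<q ^ k - 1}"
proof (rule linorder_inj_onI)
  fix i j assume "i < j" "j \<in> {..<q ^ k - 1}"
  hence "\<xi> ^ (j - i) \<noteq> 1"
    using xi_order by simp
  moreover have "\<xi> ^ j = \<xi> ^ i * \<xi> ^ (j - i)"
    using \<open>i < j\<close> by (simp flip: power_add)
  ultimately show "\<xi> ^ i \<noteq> \<xi> ^ j"
    using xi_nonzero by auto
qed auto

lemma K_nonzero_eq_xi_powers: "K - {0} = (\<lambda>j. \<xi> ^ j) ` {..<q ^ k - 1}"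
  and card_K: "card K = q ^ k"
proof -
  have powers_card: "card ((\<lambda>j. \<xi> ^ j) ` {..<q ^ k - 1}) = q ^ k - 1"
    using inj_on_xi_power by (simp add: card_image)
  have powers_sub: "(\<lambda>j. \<xi> ^ j) ` {..<q ^ k - 1} \<subseteq> K - {0}"
    using xi_in_K xi_nonzero by (auto intro: subfld_power)
  have card_K_nonzero: "card (K - {0}) = card K - 1"
    using subfld_zero by simp
  hence "card (K - {0}) \<le> q ^ k - 1"
    using card_subfld_le[of k] k_ge_2 by simp
  thus "K - {0} = (\<lambda>j. \<xi> ^ j) ` {..<q ^ k - 1}"
    using card_subset_eq[OF _ powers_sub] powers_card card_mono[OF _ powers_sub] by fastforce
  hence "card K - 1 = q ^ k - 1"
    using powers_card card_K_nonzero by simp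
  moreover have "card K > 0" "q ^ k > 0"
    using subfld_zero[of k] q_ge_2 by (auto simp: card_gt_0_iff)
  ultimately show "card K = q ^ k"
    by linarith
qed

lemma q_minus_1_cofactor:
  obtains N where "N * (q - 1) = q ^ k - 1" "N > 0"
proof
  show N_mult: "(q ^ k - 1) div (q - 1) * (q - 1) = q ^ k - 1"
    using diff_one_dvd_power_diff_one[of q k] q_ge_2 by simp
  show "(q ^ k - 1) div (q - 1) > 0"
  proof (rule ccontr)
    assume "\<not> (q ^ k - 1) div (q - 1) > 0"
    hence "q ^ k - 1 = 0"
      using N_mult by simp
    thus False
      using q_less_q_power_k q_ge_2 by simp
  qed
qed

text \<open>If N (q - 1) = q^k - 1, the powers of \<xi>^N together with 0 give q roots of x^q = x.\<close>
lemma card_Fq: "card Fq = q"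
proof -
  obtain N where N_mult: "N * (q - 1) = q ^ k - 1" and "N > 0"
    using q_minus_1_cofactor .
  define z where "z = \<xi> ^ N"
  have "z ^ (q - 1) = 1"
    using xi_power_order N_mult by (simp add: z_def flip: power_mult)
  have z_power_Fq: "z ^ j \<in> Fq" for j
  proof -
    have "j * q = j + (q - 1) * j"
      using q_ge_2 by (cases q) auto
    hence "(z ^ j) ^ q = z ^ j * (z ^ (q - 1)) ^ j"
      by (simp flip: power_mult power_add)
    thus ?thesis
      using \<open>z ^ (q - 1) = 1\<close> by (simp add: subfld_def)
  qed
  have "inj_on (\<lambda>j. z ^ j) {..<q - 1}"
  proof (rule inj_onI)
    fix i j assume "i \<in> {..<q - 1}" "j \<in> {..<q - 1}" "z ^ i = z ^ j"
    hence "N * i < N * (q - 1)" "N * j < N * (q - 1)" "\<xi> ^ (N * i) = \<xi> ^ (N * j)"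
      using \<open>N > 0\<close> by (auto simp: z_def power_mult)
    hence "N * i < q ^ k - 1" "N * j < q ^ k - 1" "\<xi> ^ (N * i) = \<xi> ^ (N * j)"
      unfolding N_mult by simp_all
    hence "N * i = N * j"
      using inj_on_xi_power by (auto dest: inj_onD)
    thus "i = j"
      using \<open>N > 0\<close> by simp
  qed
  moreover have "0 \<notin> (\<lambda>j. z ^ j) ` {..<q - 1}"
    using xi_nonzero by (auto simp: z_def)
  ultimately have "card (insert 0 ((\<lambda>j. z ^ j) ` {..<q - 1})) = q"
    using q_ge_2 by (simp add: card_image)
  moreover have "insert 0 ((\<lambda>j. z ^ j) ` {..<q - 1}) \<subseteq> Fq"
    using z_power_Fq subfld_zero by auto
  ultimately have "q \<le> card Fq"
    by (metis card_mono finite)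
  thus ?thesis
    using card_subfld_le[of 1] by simp
qed

sublocale fq_vector_space q m
  by unfold_locales (rule card_Fq)

lemma xi_notin_Fq: "\<xi> \<notin> Fq"
proof
  assume "\<xi> \<in> Fq"
  hence "\<xi> * \<xi> ^ (q - 1) = \<xi> * 1"
    using q_ge_2 by (simp add: subfld_def flip: power_Suc)
  hence "\<xi> ^ (q - 1) = 1"
    using xi_nonzero by simp
  moreover have "0 < q - 1" "q - 1 < q ^ k - 1"
    using q_ge_2 q_less_q_power_k by auto
  ultimately show False
    using xi_order by blast
qed

lemma e_ge_1: "e \<ge> 1" and double_e_less_r: "e + e < r"
proof -
  have "\<lceil>real r / 2\<rceil> = - (- int r div 2)"
    using ceiling_divide_eq_div[of "int r" 2] by simp
  also have "\<dots> = int ((r + 1) div 2)"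
    by presburger
  finally have "e = (r + 1) div 2 - 1"
    using e_eq by simp
  thus "e \<ge> 1" "e + e < r"
    using r_gt_2 by simp_all
qed

lemma K_poly_gamma_root_eq_0:
  assumes "poly_over K g" "degree g < r" "poly g \<gamma> = 0"
  shows "g = 0"
proof (rule ccontr)
  obtain f where "irreducible_over K f" "degree f = r" "poly f \<gamma> = 0"
    using gamma_root by blast
  moreover assume "g \<noteq> 0"
  ultimately show False
    using irreducible_over_root_degree_le[of k f \<gamma> g] assms by simp
qed

lemma gamma_power_coeffs_eq_0:
  assumes "a \<in> K" "b \<in> K" "c \<in> K" "d \<in> K" "1 \<le> l1" "1 \<le> l2" "l1 + l2 < r"
    and "a + b * \<gamma> ^ l1 + c * \<gamma> ^ l2 + d * \<gamma> ^ (l1 + l2) = 0"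
  shows "a = 0 \<and> d = 0 \<and> (if l1 = l2 then b + c = 0 else b = 0 \<and> c = 0)"
proof -
  define G where "G = monom a 0 + monom b l1 + monom c l2 + monom d (l1 + l2)"
  have "poly G \<gamma> = 0"
    using assms(8) by (simp add: G_def poly_monom)
  moreover have "poly_over K G"
    using assms(1-4) by (auto simp: G_def poly_over_def coeff_monom subfld_zero
        intro!: subfld_add split: if_split)
  moreover have "degree G \<le> l1 + l2"
    unfolding G_def by (intro degree_add_le order.trans[OF degree_monom_le]) auto
  ultimately have "G = 0"
    using K_poly_gamma_root_eq_0 assms(7) by simp
  hence "coeff G 0 = 0" "coeff G l1 = 0" "coeff G l2 = 0" "coeff G (l1 + l2) = 0"
    by simp_all
  thus ?thesis
    using assms(5,6) by (auto simp: G_def coeff_monom split: if_splits)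
qed

definition admissible :: "'a \<Rightarrow> 'a \<Rightarrow> nat \<Rightarrow> bool" where
  "admissible \<tau> \<delta> l \<longleftrightarrow> \<tau> \<in> T \<and> \<delta> \<in> K - {0} \<and> l \<in> {1..e}"

lemma admissibleD:
  assumes "admissible \<tau> \<delta> l"
  shows "\<tau> \<in> K" "\<tau> \<noteq> 0" "\<delta> \<in> K" "\<delta> \<noteq> 0" "1 \<le> l" "l \<le> e" "l + l < r"
  using assms T_subset double_e_less_r by (auto simp: admissible_def)

definition U_coeff :: "'a \<Rightarrow> 'a \<Rightarrow> 'a \<Rightarrow> 'a" where
  "U_coeff \<tau> \<delta> u = (\<tau> * u ^ q + u) * \<delta>"

definition U_map :: "'a \<Rightarrow> 'a \<Rightarrow> nat \<Rightarrow> 'a \<Rightarrow> 'a" where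
  "U_map \<tau> \<delta> l u = u + U_coeff \<tau> \<delta> u * \<gamma> ^ l"

lemma U_sub_eq_image: "U_sub q k \<gamma> \<tau> \<delta> l = U_map \<tau> \<delta> l ` K"
  by (auto simp: U_sub_def U_map_def U_coeff_def mult.assoc)

lemma U_coeff_in_K: "\<tau> \<in> K \<Longrightarrow> \<delta> \<in> K \<Longrightarrow> u \<in> K \<Longrightarrow> U_coeff \<tau> \<delta> u \<in> K"
  unfolding U_coeff_def by (intro subfld_mult subfld_add subfld_power)

lemma U_map_zero: "U_map \<tau> \<delta> l 0 = 0"
  using q_ge_2 by (simp add: U_map_def U_coeff_def)

lemma U_map_add: "U_map \<tau> \<delta> l (u + v) = U_map \<tau> \<delta> l u + U_map \<tau> \<delta> l v"
  by (simp add: U_map_def U_coeff_def algebra_simps frobenius_add_q)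

lemma U_map_diff: "U_map \<tau> \<delta> l (u - v) = U_map \<tau> \<delta> l u - U_map \<tau> \<delta> l v"
  by (simp add: U_map_def U_coeff_def algebra_simps frobenius_diff_q)

lemma U_map_mult: "c \<in> Fq \<Longrightarrow> U_map \<tau> \<delta> l (c * u) = c * U_map \<tau> \<delta> l u"
  by (simp add: U_map_def U_coeff_def power_mult_distrib subfld_def algebra_simps)

lemma U_map_eq_0_iff:
  assumes "admissible \<tau> \<delta> l" "u \<in> K"
  shows "U_map \<tau> \<delta> l u = 0 \<longleftrightarrow> u = 0"
proof
  assume "U_map \<tau> \<delta> l u = 0"
  thus "u = 0"
    using gamma_power_coeffs_eq_0[of u "U_coeff \<tau> \<delta> u" 0 0 l l] subfld_zero
      U_coeff_in_K admissibleD[OF assms(1)] assms(2) by (simp add: U_map_def)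
qed (simp add: U_map_zero)

lemma inj_on_U_map: "admissible \<tau> \<delta> l \<Longrightarrow> inj_on (U_map \<tau> \<delta> l) K"
  by (rule inj_onI) (metis U_map_diff U_map_eq_0_iff eq_iff_diff_eq_0 subfld_diff)

lemma fq_subspace_U_sub: "fq_subspace q (U_sub q k \<gamma> \<tau> \<delta> l)"
  unfolding fq_subspace_def U_sub_eq_image
proof (intro conjI ballI)
  show "0 \<in> U_map \<tau> \<delta> l ` K"
    using U_map_zero subfld_zero by (metis image_eqI)
  fix x y assume "x \<in> U_map \<tau> \<delta> l ` K" "y \<in> U_map \<tau> \<delta> l ` K"
  thus "x + y \<in> U_map \<tau> \<delta> l ` K"
    by (auto simp flip: U_map_add intro: subfld_add)
next
  fix c x assume "c \<in> Fq" "x \<in> U_map \<tau> \<delta> l ` K"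
  moreover have "c \<in> K"
    using \<open>c \<in> Fq\<close> subfld_1_subset by blast
  ultimately show "c * x \<in> U_map \<tau> \<delta> l ` K"
    by (auto simp flip: U_map_mult intro!: imageI subfld_mult)
qed

lemma card_U_sub: "admissible \<tau> \<delta> l \<Longrightarrow> card (U_sub q k \<gamma> \<tau> \<delta> l) = q ^ k"
  unfolding U_sub_eq_image using inj_on_U_map card_K by (simp add: card_image)

lemma fq_indep_pair_one_xi: "fq_indep_pair q 1 \<xi>"
  unfolding fq_indep_pair_def
proof (intro allI impI)
  fix c d assume cd: "c \<in> Fq \<and> d \<in> Fq \<and> c * 1 + d * \<xi> = 0"
  show "c = 0 \<and> d = 0"
  proof (cases "d = 0")
    case False
    have "d * \<xi> = - c"
      using cd by (simp add: add_eq_0_iff)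
    hence "\<xi> = - c / d"
      using False by (simp add: field_simps)
    moreover have "- c / d \<in> Fq"
      using cd by (intro subfld_divide subfld_uminus) auto
    ultimately show ?thesis
      using xi_notin_Fq by simp
  qed (use cd in simp)
qed

lemma fq_indep_pair_U_map:
  assumes "admissible \<tau> \<delta> l" "x \<in> K" "y \<in> K" "fq_indep_pair q x y"
  shows "fq_indep_pair q (U_map \<tau> \<delta> l x) (U_map \<tau> \<delta> l y)"
  unfolding fq_indep_pair_def
proof (intro allI impI)
  fix c d assume cd: "c \<in> Fq \<and> d \<in> Fq \<and> c * U_map \<tau> \<delta> l x + d * U_map \<tau> \<delta> l y = 0"
  hence "U_map \<tau> \<delta> l (c * x + d * y) = 0"
    by (simp only: U_map_add U_map_mult)
  moreover have "c * x + d * y \<in> K"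
    using cd assms(2,3) subfld_1_subset by (blast intro: subfld_add subfld_mult)
  ultimately have "c * x + d * y = 0"
    using U_map_eq_0_iff[OF assms(1)] by blast
  thus "c = 0 \<and> d = 0"
    using assms(4) cd unfolding fq_indep_pair_def by blast
qed

lemma U_sub_indep_pair:
  assumes "admissible \<tau> \<delta> l"
  obtains w1 w2 where "w1 \<in> U_sub q k \<gamma> \<tau> \<delta> l" "w2 \<in> U_sub q k \<gamma> \<tau> \<delta> l"
    "fq_indep_pair q w1 w2"
proof
  show "U_map \<tau> \<delta> l 1 \<in> U_sub q k \<gamma> \<tau> \<delta> l" "U_map \<tau> \<delta> l \<xi> \<in> U_sub q k \<gamma> \<tau> \<delta> l"
    unfolding U_sub_eq_image using subfld_one xi_in_K by auto
  show "fq_indep_pair q (U_map \<tau> \<delta> l 1) (U_map \<tau> \<delta> l \<xi>)"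
    using fq_indep_pair_U_map[OF assms subfld_one xi_in_K fq_indep_pair_one_xi] .
qed

lemma T_coset_rep_eq:
  assumes "\<tau>1 \<in> T" "\<tau>2 \<in> T" "u \<in> K" "u \<noteq> 0" "v \<in> K" "v \<noteq> 0"
    and "\<tau>1 * u ^ q * v = \<tau>2 * u * v ^ q"
  shows "\<tau>1 = \<tau>2" "v / u \<in> Fq"
proof -
  define \<mu> where "\<mu> = v / u"
  have "\<mu> \<in> K" "\<mu> \<noteq> 0" "v = \<mu> * u"
    using assms(3-6) by (simp_all add: \<mu>_def subfld_divide)
  have \<mu>_power_q: "\<mu> ^ q = \<mu> * \<mu> ^ (q - 1)"
    using q_ge_2 by (simp flip: power_Suc)
  have "(u ^ q * u) * (\<tau>1 * \<mu>) = (u ^ q * u) * (\<tau>2 * \<mu> ^ q)"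
    using assms(7) unfolding \<open>v = \<mu> * u\<close> by (simp add: power_mult_distrib algebra_simps)
  hence "\<mu> * \<tau>1 = \<mu> * (\<tau>2 * \<mu> ^ (q - 1))"
    using assms(4) unfolding \<mu>_power_q by (simp add: algebra_simps)
  hence \<tau>1_eq: "\<tau>1 = \<tau>2 * \<mu> ^ (q - 1)"
    using \<open>\<mu> \<noteq> 0\<close> by simp
  obtain j where "\<mu> = \<xi> ^ j"
    using K_nonzero_eq_xi_powers \<open>\<mu> \<in> K\<close> \<open>\<mu> \<noteq> 0\<close> by blast
  hence "\<tau>1 = \<tau>2 * (\<xi> ^ (q - 1)) ^ j"
    using \<tau>1_eq by (simp flip: power_mult add: mult.commute)
  moreover have "\<tau>1 = \<tau>1 * (\<xi> ^ (q - 1)) ^ 0"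
    by simp
  moreover have "\<tau>1 \<in> K - {0}"
    using assms(1) T_subset by blast
  ultimately show "\<tau>1 = \<tau>2"
    using T_coset_reps assms(1,2) by blast
  hence "\<mu> ^ (q - 1) = 1"
    using \<tau>1_eq assms(1) T_subset by auto
  thus "v / u \<in> Fq"
    using \<mu>_power_q by (simp add: subfld_def \<mu>_def)
qed

definition H :: "'a set" where
  "H = range (\<lambda>j. (\<xi> ^ (q - 1)) ^ j)"

lemma H_subset: "H \<subseteq> K - {0}"
  using xi_in_K xi_nonzero by (auto simp: H_def subfld_power)

lemma card_H:
  assumes N_mult: "N * (q - 1) = q ^ k - 1" and "N > 0"
  shows "card H = N"
proof -
  define z where "z = \<xi> ^ (q - 1)"
  have "z ^ N = 1"
    using xi_power_order N_mult by (simp add: z_def mult.commute flip: power_mult)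
  have z_power_mod: "z ^ j = z ^ (j mod N)" for j
  proof -
    have "z ^ j = (z ^ N) ^ (j div N) * z ^ (j mod N)"
      by (simp flip: power_add power_mult)
    thus ?thesis
      using \<open>z ^ N = 1\<close> by simp
  qed
  have "H = (\<lambda>j. z ^ j) ` {..<N}"
  proof
    show "H \<subseteq> (\<lambda>j. z ^ j) ` {..<N}"
    proof
      fix x assume "x \<in> H"
      then obtain j where "x = z ^ j"
        unfolding H_def z_def by blast
      hence "x = z ^ (j mod N)" "j mod N < N"
        using z_power_mod[of j] \<open>N > 0\<close> by simp_all
      thus "x \<in> (\<lambda>j. z ^ j) ` {..<N}"
        by blast
    qed
  qed (auto simp: H_def z_def)
  moreover have "inj_on (\<lambda>j. z ^ j) {..<N}"
  proof (rule inj_onI)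
    fix i j assume "i \<in> {..<N}" "j \<in> {..<N}" "z ^ i = z ^ j"
    hence "(q - 1) * i < (q - 1) * N" "(q - 1) * j < (q - 1) * N"
      "\<xi> ^ ((q - 1) * i) = \<xi> ^ ((q - 1) * j)"
      using q_ge_2 by (auto simp: z_def power_mult)
    moreover have N_mult': "(q - 1) * N = q ^ k - 1"
      using N_mult by (simp add: mult.commute)
    ultimately have "(q - 1) * i < q ^ k - 1" "(q - 1) * j < q ^ k - 1"
      "\<xi> ^ ((q - 1) * i) = \<xi> ^ ((q - 1) * j)"
      by (simp_all only: N_mult')
    hence "(q - 1) * i = (q - 1) * j"
      using inj_on_xi_power by (auto dest: inj_onD)
    thus "i = j"
      using q_ge_2 by simp
  qed
  ultimately show ?thesis
    by (simp add: card_image)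
qed

lemma bij_betw_T_times_H: "bij_betw (\<lambda>(t, h). t * h) (T \<times> H) (K - {0})"
proof (rule bij_betw_imageI)
  show "inj_on (\<lambda>(t, h). t * h) (T \<times> H)"
  proof (rule inj_onI, clarify)
    fix t1 h1 t2 h2 assume t: "t1 \<in> T" "t2 \<in> T" and h: "h1 \<in> H" "h2 \<in> H"
      and eq: "t1 * h1 = t2 * h2"
    have "t1 * h1 \<in> K - {0}"
      using t(1) h(1) T_subset H_subset by (auto intro: subfld_mult)
    hence "\<exists>!\<tau>. \<tau> \<in> T \<and> (\<exists>j. t1 * h1 = \<tau> * (\<xi> ^ (q - 1)) ^ j)"
      using T_coset_reps by blast
    moreover obtain i1 i2 where "h1 = (\<xi> ^ (q - 1)) ^ i1" "h2 = (\<xi> ^ (q - 1)) ^ i2"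
      using h unfolding H_def by blast
    hence "t1 \<in> T \<and> (\<exists>j. t1 * h1 = t1 * (\<xi> ^ (q - 1)) ^ j)"
      "t2 \<in> T \<and> (\<exists>j. t1 * h1 = t2 * (\<xi> ^ (q - 1)) ^ j)"
      using t eq by blast+
    ultimately have "t1 = t2"
      by blast
    thus "t1 = t2 \<and> h1 = h2"
      using eq t(1) T_subset by auto
  qed
  show "(\<lambda>(t, h). t * h) ` (T \<times> H) = K - {0}"
  proof
    show "(\<lambda>(t, h). t * h) ` (T \<times> H) \<subseteq> K - {0}"
      using T_subset H_subset by (auto intro: subfld_mult)
    show "K - {0} \<subseteq> (\<lambda>(t, h). t * h) ` (T \<times> H)"
    proof
      fix x assume "x \<in> K - {0}"
      then obtain t j where "t \<in> T" "x = t * (\<xi> ^ (q - 1)) ^ j"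
        using T_coset_reps by blast
      thus "x \<in> (\<lambda>(t, h). t * h) ` (T \<times> H)"
        by (force simp: H_def)
    qed
  qed
qed

lemma card_T: "card T = q - 1"
proof -
  obtain N where N_mult: "N * (q - 1) = q ^ k - 1" and "N > 0"
    using q_minus_1_cofactor .
  have "card T * N = card (T \<times> H)"
    using card_H[OF N_mult \<open>N > 0\<close>] by (simp add: card_cartesian_product)
  also have "\<dots> = card (K - {0})"
    using bij_betw_T_times_H by (rule bij_betw_same_card)
  also have "\<dots> = (q - 1) * N"
    using card_K subfld_zero N_mult by (simp add: mult.commute)
  finally show ?thesis
    using \<open>N > 0\<close> by simp
qed

lemma U_map_cross_eq_imp_proportional:
  assumes "admissible \<tau>1 \<delta>1 l1" "admissible \<tau>2 \<delta>2 l2"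
    and "u \<in> K" "u \<noteq> 0" "v \<in> K" "v' \<in> K" "\<rho> \<in> K"
    and "U_map \<tau>1 \<delta>1 l1 u * U_map \<tau>2 \<delta>2 l2 v' = U_map \<tau>1 \<delta>1 l1 (\<rho> * u) * U_map \<tau>2 \<delta>2 l2 v"
  shows "v' = \<rho> * v"
proof -
  let ?c1 = "U_coeff \<tau>1 \<delta>1" and ?c2 = "U_coeff \<tau>2 \<delta>2"
  have "0 = U_map \<tau>1 \<delta>1 l1 u * U_map \<tau>2 \<delta>2 l2 v' - U_map \<tau>1 \<delta>1 l1 (\<rho> * u) * U_map \<tau>2 \<delta>2 l2 v"
    using assms(8) by simp
  also have "\<dots> = (u * v' - \<rho> * u * v) + (?c1 u * v' - ?c1 (\<rho> * u) * v) * \<gamma> ^ l1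
        + (u * ?c2 v' - \<rho> * u * ?c2 v) * \<gamma> ^ l2
        + (?c1 u * ?c2 v' - ?c1 (\<rho> * u) * ?c2 v) * \<gamma> ^ (l1 + l2)"
    unfolding U_map_def power_add by (rule mult_diff_mult_expand)
  finally have expansion: "\<dots> = 0" ..
  have "?c1 u \<in> K" "?c1 (\<rho> * u) \<in> K" "?c2 v \<in> K" "?c2 v' \<in> K"
    using assms admissibleD by (auto intro!: U_coeff_in_K subfld_mult)
  moreover have "l1 + l2 < r"
    using admissibleD[OF assms(1)] admissibleD[OF assms(2)] by linarith
  ultimately have "u * v' - \<rho> * u * v = 0"
    using gamma_power_coeffs_eq_0[OF _ _ _ _ _ _ _ expansion] admissibleD[OF assms(1)]
      admissibleD[OF assms(2)] assms(3-7) by (blast intro: subfld_diff subfld_mult)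
  thus ?thesis
    using assms(4) by (simp add: algebra_simps)
qed

lemma U_map_cross_diff:
  "U_map \<tau>1 \<delta>1 l1 u * U_map \<tau>2 \<delta>2 l2 (\<rho> * v) - U_map \<tau>1 \<delta>1 l1 (\<rho> * u) * U_map \<tau>2 \<delta>2 l2 v
    = (\<rho> - \<rho> ^ q) * (\<delta>1 * \<tau>1 * u ^ q * v) * \<gamma> ^ l1
      + (\<rho> - \<rho> ^ q) * - (\<delta>2 * \<tau>2 * u * v ^ q) * \<gamma> ^ l2
      + (\<rho> - \<rho> ^ q) * (\<delta>1 * \<delta>2 * (\<tau>1 * u ^ q * v - \<tau>2 * u * v ^ q)) * \<gamma> ^ (l1 + l2)"
proof -
  let ?c1 = "U_coeff \<tau>1 \<delta>1" and ?c2 = "U_coeff \<tau>2 \<delta>2" and ?d = "\<rho> - \<rho> ^ q"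
  have "U_map \<tau>1 \<delta>1 l1 u * U_map \<tau>2 \<delta>2 l2 (\<rho> * v) - U_map \<tau>1 \<delta>1 l1 (\<rho> * u) * U_map \<tau>2 \<delta>2 l2 v
      = (u * (\<rho> * v) - \<rho> * u * v) + (?c1 u * (\<rho> * v) - ?c1 (\<rho> * u) * v) * \<gamma> ^ l1
        + (u * ?c2 (\<rho> * v) - \<rho> * u * ?c2 v) * \<gamma> ^ l2
        + (?c1 u * ?c2 (\<rho> * v) - ?c1 (\<rho> * u) * ?c2 v) * \<gamma> ^ (l1 + l2)"
    unfolding U_map_def power_add by (rule mult_diff_mult_expand)
  also have "?c1 u * (\<rho> * v) - ?c1 (\<rho> * u) * v = ?d * (\<delta>1 * \<tau>1 * u ^ q * v)"
    by (simp add: U_coeff_def power_mult_distrib algebra_simps)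
  also have "u * ?c2 (\<rho> * v) - \<rho> * u * ?c2 v = ?d * - (\<delta>2 * \<tau>2 * u * v ^ q)"
    by (simp add: U_coeff_def power_mult_distrib algebra_simps)
  also have "?c1 u * ?c2 (\<rho> * v) - ?c1 (\<rho> * u) * ?c2 v
      = ?d * (\<delta>1 * \<delta>2 * (\<tau>1 * u ^ q * v - \<tau>2 * u * v ^ q))"
    by (simp add: U_coeff_def power_mult_distrib algebra_simps)
  finally show ?thesis
    by simp
qed

lemma U_map_cross_eq_imp_same_params:
  assumes "admissible \<tau>1 \<delta>1 l1" "admissible \<tau>2 \<delta>2 l2"
    and "u \<in> K" "u \<noteq> 0" "v \<in> K" "v \<noteq> 0" "\<rho> \<in> K" "\<rho> \<notin> Fq"
    and "U_map \<tau>1 \<delta>1 l1 u * U_map \<tau>2 \<delta>2 l2 (\<rho> * v) = U_map \<tau>1 \<delta>1 l1 (\<rho> * u) * U_map \<tau>2 \<delta>2 l2 v"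
  shows "l1 = l2" "\<delta>1 = \<delta>2" "\<tau>1 * u ^ q * v = \<tau>2 * u * v ^ q"
proof -
  note adm1 = admissibleD[OF assms(1)] and adm2 = admissibleD[OF assms(2)]
  let ?d = "\<rho> - \<rho> ^ q"
  define A where "A = \<delta>1 * \<tau>1 * u ^ q * v"
  define B where "B = \<delta>2 * \<tau>2 * u * v ^ q"
  define C where "C = \<delta>1 * \<delta>2 * (\<tau>1 * u ^ q * v - \<tau>2 * u * v ^ q)"
  have expansion: "0 + ?d * A * \<gamma> ^ l1 + ?d * - B * \<gamma> ^ l2 + ?d * C * \<gamma> ^ (l1 + l2) = 0"
    using U_map_cross_diff[of \<tau>1 \<delta>1 l1 u \<tau>2 \<delta>2 l2 \<rho> v] assms(9) by (simp add: A_def B_def C_def)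
  have "?d \<in> K"
    using assms(7) by (intro subfld_diff subfld_power)
  hence "?d * A \<in> K" "?d * - B \<in> K" "?d * C \<in> K"
    using adm1 adm2 assms(3,5) unfolding A_def B_def C_def
    by (auto intro!: subfld_mult subfld_uminus subfld_diff subfld_power)
  moreover have "l1 + l2 < r"
    using adm1 adm2 by linarith
  ultimately have C0: "?d * C = 0"
    and coeffs: "if l1 = l2 then ?d * A + ?d * - B = 0 else ?d * A = 0 \<and> ?d * - B = 0"
    using gamma_power_coeffs_eq_0[OF subfld_zero _ _ _ adm1(5) adm2(5) _ expansion] by auto
  have "?d \<noteq> 0"
    using assms(8) by (simp add: subfld_def)
  moreover have "A \<noteq> 0"
    using adm1 assms(4,6) by (simp add: A_def)
  ultimately show "l1 = l2"
    using coeffs by (auto split: if_splits)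
  hence "?d * (A - B) = 0"
    using coeffs by (simp add: right_diff_distrib)
  hence "A = B"
    using \<open>?d \<noteq> 0\<close> by simp
  have "C = 0"
    using C0 \<open>?d \<noteq> 0\<close> by simp
  show \<tau>_eq: "\<tau>1 * u ^ q * v = \<tau>2 * u * v ^ q"
    using \<open>C = 0\<close> adm1 adm2 by (simp add: C_def)
  hence "\<delta>1 * (\<tau>1 * u ^ q * v) = \<delta>2 * (\<tau>1 * u ^ q * v)"
    using \<open>A = B\<close> by (simp add: A_def B_def mult.assoc)
  thus "\<delta>1 = \<delta>2"
    using adm1 assms(4,6) by simp
qed

lemma U_map_cross_eq_imp_same_U:
  assumes adm1: "admissible \<tau>1 \<delta>1 l1" and adm2: "admissible \<tau>2 \<delta>2 l2"
    and "u \<in> K" "u \<noteq> 0" "v \<in> K" "v \<noteq> 0" "v' \<in> K" "\<rho> \<in> K" "\<rho> \<notin> Fq"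
    and cross: "U_map \<tau>1 \<delta>1 l1 u * U_map \<tau>2 \<delta>2 l2 v' = U_map \<tau>1 \<delta>1 l1 (\<rho> * u) * U_map \<tau>2 \<delta>2 l2 v"
  shows "\<tau>1 = \<tau>2" "\<delta>1 = \<delta>2" "l1 = l2" "v / u \<in> Fq"
proof -
  have "v' = \<rho> * v"
    using U_map_cross_eq_imp_proportional[OF adm1 adm2 assms(3,4,5,7,8) cross] .
  note same = U_map_cross_eq_imp_same_params[OF adm1 adm2 assms(3-6,8,9) cross[unfolded this]]
  show "\<delta>1 = \<delta>2" "l1 = l2"
    using same(2,1) .
  show "\<tau>1 = \<tau>2" "v / u \<in> Fq"
    using T_coset_rep_eq[OF _ _ assms(3-6) same(3)] adm1 adm2 unfolding admissible_def by blast+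
qed

lemma scaled_U_sub_shared_indep_pair:
  assumes adm1: "admissible \<tau>1 \<delta>1 l1" and adm2: "admissible \<tau>2 \<delta>2 l2" and "\<alpha> \<noteq> 0"
    and w1: "w1 \<in> (\<lambda>x. \<alpha> * x) ` U_sub q k \<gamma> \<tau>1 \<delta>1 l1" "w1 \<in> U_sub q k \<gamma> \<tau>2 \<delta>2 l2"
    and w2: "w2 \<in> (\<lambda>x. \<alpha> * x) ` U_sub q k \<gamma> \<tau>1 \<delta>1 l1" "w2 \<in> U_sub q k \<gamma> \<tau>2 \<delta>2 l2"
    and indep: "fq_indep_pair q w1 w2"
  shows "\<tau>1 = \<tau>2 \<and> \<delta>1 = \<delta>2 \<and> l1 = l2 \<and> \<alpha> \<in> Fq"
proof -
  let ?U1 = "U_map \<tau>1 \<delta>1 l1" and ?U2 = "U_map \<tau>2 \<delta>2 l2"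
  obtain u1 u2 v1 v2 where uv: "u1 \<in> K" "u2 \<in> K" "v1 \<in> K" "v2 \<in> K"
    and w1_eq: "w1 = \<alpha> * ?U1 u1" "w1 = ?U2 v1" and w2_eq: "w2 = \<alpha> * ?U1 u2" "w2 = ?U2 v2"
    using w1 w2 unfolding U_sub_eq_image by blast
  have "w1 \<noteq> 0"
    using indep[unfolded fq_indep_pair_def, rule_format, of 1 0] subfld_zero subfld_one by auto
  hence "u1 \<noteq> 0" "v1 \<noteq> 0"
    using w1_eq U_map_zero by auto
  define \<rho> where "\<rho> = u2 / u1"
  have "\<rho> \<in> K" "u2 = \<rho> * u1"
    using uv \<open>u1 \<noteq> 0\<close> by (simp_all add: \<rho>_def subfld_divide)
  have "\<rho> \<notin> Fq"
  proof
    assume "\<rho> \<in> Fq"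
    hence "\<rho> * w1 + (- 1) * w2 = 0"
      using w1_eq w2_eq \<open>u2 = \<rho> * u1\<close> U_map_mult by (simp add: mult.left_commute)
    thus False
      using indep[unfolded fq_indep_pair_def, rule_format, of \<rho> "- 1"] \<open>\<rho> \<in> Fq\<close>
        subfld_one subfld_uminus by auto
  qed
  have "?U1 u1 * ?U2 v2 = ?U1 (\<rho> * u1) * ?U2 v1"
    using w1_eq w2_eq \<open>u2 = \<rho> * u1\<close> by (simp add: mult.left_commute)
  note same = U_map_cross_eq_imp_same_U[OF adm1 adm2 uv(1) \<open>u1 \<noteq> 0\<close> uv(3) \<open>v1 \<noteq> 0\<close> uv(4)
      \<open>\<rho> \<in> K\<close> \<open>\<rho> \<notin> Fq\<close> this]
  define \<mu> where "\<mu> = v1 / u1"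
  have "\<mu> \<in> Fq" "v1 = \<mu> * u1"
    using same(4) \<open>u1 \<noteq> 0\<close> by (simp_all add: \<mu>_def)
  have "\<alpha> * ?U1 u1 = ?U2 (\<mu> * u1)"
    using w1_eq \<open>v1 = \<mu> * u1\<close> by simp
  also have "\<dots> = \<mu> * ?U1 u1"
    using U_map_mult[OF \<open>\<mu> \<in> Fq\<close>] same(1-3) by simp
  finally have "\<alpha> = \<mu>"
    using w1_eq \<open>w1 \<noteq> 0\<close> by simp
  thus ?thesis
    using same(1-3) \<open>\<mu> \<in> Fq\<close> by simp
qed

lemma image_mult_U_sub_eq_imp:
  assumes "admissible \<tau>1 \<delta>1 l1" "admissible \<tau>2 \<delta>2 l2" "\<alpha> \<noteq> 0"
    and "(\<lambda>x. \<alpha> * x) ` U_sub q k \<gamma> \<tau>1 \<delta>1 l1 = U_sub q k \<gamma> \<tau>2 \<delta>2 l2"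
  shows "\<tau>1 = \<tau>2 \<and> \<delta>1 = \<delta>2 \<and> l1 = l2 \<and> \<alpha> \<in> Fq"
proof -
  obtain w1 w2 where "w1 \<in> U_sub q k \<gamma> \<tau>2 \<delta>2 l2" "w2 \<in> U_sub q k \<gamma> \<tau>2 \<delta>2 l2"
    "fq_indep_pair q w1 w2"
    using U_sub_indep_pair[OF assms(2)] .
  thus ?thesis
    using scaled_U_sub_shared_indep_pair[OF assms(1-3)] assms(4) by simp
qed

lemma image_mult_U_sub_eq_iff:
  assumes "admissible \<tau> \<delta> l" "\<alpha> \<noteq> 0" "\<beta> \<noteq> 0"
  shows "(\<lambda>x. \<alpha> * x) ` U_sub q k \<gamma> \<tau> \<delta> l = (\<lambda>x. \<beta> * x) ` U_sub q k \<gamma> \<tau> \<delta> l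
    \<longleftrightarrow> \<alpha> / \<beta> \<in> Fq"
proof -
  have scale: "(\<lambda>x. \<alpha> * x) ` U_sub q k \<gamma> \<tau> \<delta> l
      = (\<lambda>x. \<beta> * x) ` (\<lambda>x. (\<alpha> / \<beta>) * x) ` U_sub q k \<gamma> \<tau> \<delta> l"
    unfolding image_mult_image_mult using assms(3) by simp
  show ?thesis
  proof
    assume "(\<lambda>x. \<alpha> * x) ` U_sub q k \<gamma> \<tau> \<delta> l = (\<lambda>x. \<beta> * x) ` U_sub q k \<gamma> \<tau> \<delta> l"
    hence "(\<lambda>x. (\<alpha> / \<beta>) * x) ` U_sub q k \<gamma> \<tau> \<delta> l = U_sub q k \<gamma> \<tau> \<delta> l"
      unfolding scale using inj_image_eq_iff[of "(*) \<beta>"] assms(3) by simp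
    thus "\<alpha> / \<beta> \<in> Fq"
      using image_mult_U_sub_eq_imp[OF assms(1) assms(1)] assms(2,3) by simp
  next
    assume "\<alpha> / \<beta> \<in> Fq"
    thus "(\<lambda>x. \<alpha> * x) ` U_sub q k \<gamma> \<tau> \<delta> l = (\<lambda>x. \<beta> * x) ` U_sub q k \<gamma> \<tau> \<delta> l"
    proof -
      have "(\<lambda>x. (\<alpha> / \<beta>) * x) ` U_sub q k \<gamma> \<tau> \<delta> l = U_sub q k \<gamma> \<tau> \<delta> l"
        using image_mult_fq_subspace[OF fq_subspace_U_sub \<open>\<alpha> / \<beta> \<in> Fq\<close>] assms(2,3) by simp
      thus ?thesis
        unfolding scale by (simp only:)
    qed
  qed
qed

lemma card_orbit_U_sub:
  assumes "admissible \<tau> \<delta> l"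
  shows "card (orbit (U_sub q k \<gamma> \<tau> \<delta> l)) * (q - 1) = q ^ n - 1"
proof -
  let ?U = "U_sub q k \<gamma> \<tau> \<delta> l"
  define f where "f \<alpha> = (\<lambda>x. \<alpha> * x) ` ?U" for \<alpha>
  have "card {\<beta> \<in> UNIV - {0}. f \<beta> = f \<alpha>} = q - 1" if "\<alpha> \<in> UNIV - {0}" for \<alpha>
  proof -
    have "{\<beta> \<in> UNIV - {0}. f \<beta> = f \<alpha>} = (\<lambda>c. c * \<alpha>) ` (Fq - {0})"
    proof (intro equalityI subsetI)
      fix \<beta> assume "\<beta> \<in> {\<beta> \<in> UNIV - {0}. f \<beta> = f \<alpha>}"
      hence "\<beta> / \<alpha> \<in> Fq - {0}" "\<beta> = (\<beta> / \<alpha>) * \<alpha>"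
        using image_mult_U_sub_eq_iff[OF assms] that by (auto simp: f_def)
      thus "\<beta> \<in> (\<lambda>c. c * \<alpha>) ` (Fq - {0})"
        by blast
    next
      fix \<beta> assume "\<beta> \<in> (\<lambda>c. c * \<alpha>) ` (Fq - {0})"
      then obtain c where "c \<in> Fq" "c \<noteq> 0" "\<beta> = c * \<alpha>"
        by blast
      thus "\<beta> \<in> {\<beta> \<in> UNIV - {0}. f \<beta> = f \<alpha>}"
        using image_mult_U_sub_eq_iff[OF assms, of "c * \<alpha>" \<alpha>] that by (simp add: f_def)
    qed
    moreover have "inj_on (\<lambda>c. c * \<alpha>) (Fq - {0})"
      using that by (auto intro: inj_onI)
    ultimately show ?thesis
      using card_Fq subfld_zero by (simp add: card_image)
  qed
  hence "card (UNIV - {0 :: 'a}) = card (f ` (UNIV - {0})) * (q - 1)"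
    by (rule card_eq_card_image_mult_fibre[OF finite])
  moreover have "orbit ?U = f ` (UNIV - {0})"
    by (auto simp: orbit_def f_def)
  ultimately show ?thesis
    using card_UNIV by simp
qed

definition code :: "'a set set" where
  "code = \<Union>{orbit (U_sub q k \<gamma> \<tau> \<delta> l) | \<tau> \<delta> l. \<tau> \<in> T \<and> \<delta> \<in> K - {0} \<and> l \<in> {1..e}}"

lemma mem_code_iff:
  "U \<in> code \<longleftrightarrow>
    (\<exists>\<tau> \<delta> l \<alpha>. admissible \<tau> \<delta> l \<and> \<alpha> \<noteq> 0 \<and> U = (\<lambda>x. \<alpha> * x) ` U_sub q k \<gamma> \<tau> \<delta> l)"
proof
  assume "U \<in> code"
  then obtain \<tau> \<delta> l where "admissible \<tau> \<delta> l" "U \<in> orbit (U_sub q k \<gamma> \<tau> \<delta> l)"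
    unfolding code_def admissible_def by blast
  thus "\<exists>\<tau> \<delta> l \<alpha>. admissible \<tau> \<delta> l \<and> \<alpha> \<noteq> 0 \<and> U = (\<lambda>x. \<alpha> * x) ` U_sub q k \<gamma> \<tau> \<delta> l"
    unfolding orbit_def by blast
next
  assume "\<exists>\<tau> \<delta> l \<alpha>. admissible \<tau> \<delta> l \<and> \<alpha> \<noteq> 0 \<and> U = (\<lambda>x. \<alpha> * x) ` U_sub q k \<gamma> \<tau> \<delta> l"
  then obtain \<tau> \<delta> l where "admissible \<tau> \<delta> l" "U \<in> orbit (U_sub q k \<gamma> \<tau> \<delta> l)"
    unfolding orbit_def by blast
  thus "U \<in> code"
    unfolding code_def admissible_def by blast
qed

lemma image_mult_U_sub_in_code:
  "admissible \<tau> \<delta> l \<Longrightarrow> \<alpha> \<noteq> 0 \<Longrightarrow> (\<lambda>x. \<alpha> * x) ` U_sub q k \<gamma> \<tau> \<delta> l \<in> code"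
  unfolding mem_code_iff by blast

lemma U_sub_in_code: "admissible \<tau> \<delta> l \<Longrightarrow> U_sub q k \<gamma> \<tau> \<delta> l \<in> code"
  using image_mult_U_sub_in_code[of \<tau> \<delta> l 1] by simp

lemma code_subspace:
  assumes "U \<in> code"
  shows "fq_subspace q U" "fq_dim q U = k"
proof -
  obtain \<tau> \<delta> l \<alpha> where "admissible \<tau> \<delta> l" "\<alpha> \<noteq> 0"
    and U: "U = (\<lambda>x. \<alpha> * x) ` U_sub q k \<gamma> \<tau> \<delta> l"
    using assms[unfolded mem_code_iff] by blast
  show "fq_subspace q U"
    unfolding U by (rule fq_subspace_image_mult[OF fq_subspace_U_sub])
  moreover have "card U = q ^ k"
    unfolding U using card_image_mult[OF \<open>\<alpha> \<noteq> 0\<close>] card_U_sub[OF \<open>admissible \<tau> \<delta> l\<close>]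
    by simp
  ultimately show "fq_dim q U = k"
    by (rule fq_dim_eqI)
qed

lemma code_image_mult:
  assumes "U \<in> code" "\<alpha> \<noteq> 0"
  shows "(\<lambda>x. \<alpha> * x) ` U \<in> code"
proof -
  obtain \<tau> \<delta> l \<beta> where "admissible \<tau> \<delta> l" "\<beta> \<noteq> 0"
    and U: "U = (\<lambda>x. \<beta> * x) ` U_sub q k \<gamma> \<tau> \<delta> l"
    using assms(1)[unfolded mem_code_iff] by blast
  moreover have "\<alpha> * \<beta> \<noteq> 0"
    using assms(2) \<open>\<beta> \<noteq> 0\<close> by simp
  ultimately show ?thesis
    unfolding mem_code_iff U image_mult_image_mult by blast
qed

lemma card_code_Int_le:
  assumes "U \<in> code" "V \<in> code" "U \<noteq> V"
  shows "card (U \<inter> V) \<le> q"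
proof -
  obtain \<tau>1 \<delta>1 l1 \<alpha> where adm1: "admissible \<tau>1 \<delta>1 l1" and "\<alpha> \<noteq> 0"
    and U: "U = (\<lambda>x. \<alpha> * x) ` U_sub q k \<gamma> \<tau>1 \<delta>1 l1"
    using assms(1)[unfolded mem_code_iff] by blast
  obtain \<tau>2 \<delta>2 l2 \<beta> where adm2: "admissible \<tau>2 \<delta>2 l2" and "\<beta> \<noteq> 0"
    and V: "V = (\<lambda>x. \<beta> * x) ` U_sub q k \<gamma> \<tau>2 \<delta>2 l2"
    using assms(2)[unfolded mem_code_iff] by blast
  have shift: "inverse \<beta> * z \<in> (\<lambda>x. (c / \<beta>) * x) ` A"
    if z_mem: "z \<in> (\<lambda>x. c * x) ` A" for z c A
  proof -
    obtain a where "a \<in> A" "z = c * a"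
      using z_mem by blast
    hence "inverse \<beta> * z = (c / \<beta>) * a"
      by (simp add: divide_inverse ac_simps)
    thus ?thesis
      using \<open>a \<in> A\<close> by blast
  qed
  have "\<not> fq_indep_pair q x y" if "x \<in> U \<inter> V" "y \<in> U \<inter> V" for x y
  proof
    assume "fq_indep_pair q x y"
    hence indep: "fq_indep_pair q (inverse \<beta> * x) (inverse \<beta> * y)"
      using \<open>\<beta> \<noteq> 0\<close> by (simp add: fq_indep_pair_mult)
    have mem: "inverse \<beta> * x \<in> (\<lambda>x. (\<alpha> / \<beta>) * x) ` U_sub q k \<gamma> \<tau>1 \<delta>1 l1"
      "inverse \<beta> * y \<in> (\<lambda>x. (\<alpha> / \<beta>) * x) ` U_sub q k \<gamma> \<tau>1 \<delta>1 l1"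
      "inverse \<beta> * x \<in> U_sub q k \<gamma> \<tau>2 \<delta>2 l2" "inverse \<beta> * y \<in> U_sub q k \<gamma> \<tau>2 \<delta>2 l2"
      using that shift[of _ \<alpha>] shift[of _ \<beta>] \<open>\<beta> \<noteq> 0\<close> unfolding U V by auto
    have "\<alpha> / \<beta> \<noteq> 0"
      using \<open>\<alpha> \<noteq> 0\<close> \<open>\<beta> \<noteq> 0\<close> by simp
    hence "\<tau>1 = \<tau>2 \<and> \<delta>1 = \<delta>2 \<and> l1 = l2 \<and> \<alpha> / \<beta> \<in> Fq"
      using scaled_U_sub_shared_indep_pair[OF adm1 adm2 _ mem(1,3,2,4) indep] by blast
    hence "U = V"
      using image_mult_U_sub_eq_iff[OF adm2 \<open>\<alpha> \<noteq> 0\<close> \<open>\<beta> \<noteq> 0\<close>] unfolding U V by simp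
    thus False
      using assms(3) by simp
  qed
  moreover have "fq_subspace q (U \<inter> V)"
    using code_subspace(1)[OF assms(1)] code_subspace(1)[OF assms(2)] by (rule fq_subspace_Int)
  ultimately show ?thesis
    using card_fq_subspace_le_if_no_indep_pair by simp
qed

lemma code_dist_ge:
  assumes "U \<in> code" "V \<in> code" "U \<noteq> V"
  shows "subspace_dist q U V \<ge> 2 * int k - 2"
proof -
  have "fq_subspace q (U \<inter> V)"
    using code_subspace(1)[OF assms(1)] code_subspace(1)[OF assms(2)] by (rule fq_subspace_Int)
  hence "fq_dim q (U \<inter> V) \<le> 1"
    using fq_dim_le_1 card_code_Int_le[OF assms] by simp
  thus ?thesis
    using code_subspace(2) assms by (simp add: subspace_dist_def)
qed

lemma orbit_U_sub_disjoint:
  assumes "admissible \<tau>1 \<delta>1 l1" "admissible \<tau>2 \<delta>2 l2" "(\<tau>1, \<delta>1, l1) \<noteq> (\<tau>2, \<delta>2, l2)"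
  shows "orbit (U_sub q k \<gamma> \<tau>1 \<delta>1 l1) \<inter> orbit (U_sub q k \<gamma> \<tau>2 \<delta>2 l2) = {}"
proof (rule ccontr)
  assume "orbit (U_sub q k \<gamma> \<tau>1 \<delta>1 l1) \<inter> orbit (U_sub q k \<gamma> \<tau>2 \<delta>2 l2) \<noteq> {}"
  then obtain \<alpha> \<beta> where "\<alpha> \<noteq> 0" "\<beta> \<noteq> 0"
    "(\<lambda>x. \<alpha> * x) ` U_sub q k \<gamma> \<tau>1 \<delta>1 l1 = (\<lambda>x. \<beta> * x) ` U_sub q k \<gamma> \<tau>2 \<delta>2 l2"
    unfolding orbit_def by auto
  hence "(\<lambda>x. inverse \<beta> * x) ` (\<lambda>x. \<alpha> * x) ` U_sub q k \<gamma> \<tau>1 \<delta>1 l1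
      = (\<lambda>x. inverse \<beta> * x) ` (\<lambda>x. \<beta> * x) ` U_sub q k \<gamma> \<tau>2 \<delta>2 l2"
    by simp
  hence "(\<lambda>x. (inverse \<beta> * \<alpha>) * x) ` U_sub q k \<gamma> \<tau>1 \<delta>1 l1 = U_sub q k \<gamma> \<tau>2 \<delta>2 l2"
    unfolding image_mult_image_mult using \<open>\<beta> \<noteq> 0\<close> by simp
  moreover have "inverse \<beta> * \<alpha> \<noteq> 0"
    using \<open>\<alpha> \<noteq> 0\<close> \<open>\<beta> \<noteq> 0\<close> by simp
  ultimately show False
    using image_mult_U_sub_eq_imp[OF assms(1,2)] assms(3) by blast
qed

lemma card_code: "card code = e * (q ^ k - 1) * (q ^ n - 1)"
proof -
  define I where "I = T \<times> (K - {0}) \<times> {1..e}"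
  define orb where "orb = (\<lambda>(\<tau>, \<delta>, l). orbit (U_sub q k \<gamma> \<tau> \<delta> l))"
  have "{orbit (U_sub q k \<gamma> \<tau> \<delta> l) | \<tau> \<delta> l. \<tau> \<in> T \<and> \<delta> \<in> K - {0} \<and> l \<in> {1..e}} = orb ` I"
    unfolding orb_def I_def by force
  hence code_eq: "code = \<Union> (orb ` I)"
    by (simp add: code_def)
  have adm: "admissible \<tau> \<delta> l" if "(\<tau>, \<delta>, l) \<in> I" for \<tau> \<delta> l
    using that by (simp add: I_def admissible_def)
  have disjoint: "orb i \<inter> orb j = {}" if "i \<in> I" "j \<in> I" "i \<noteq> j" for i j
  proof -
    obtain \<tau>1 \<delta>1 l1 \<tau>2 \<delta>2 l2 where "i = (\<tau>1, \<delta>1, l1)" "j = (\<tau>2, \<delta>2, l2)"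
      by (cases i, cases j) auto
    thus ?thesis
      using orbit_U_sub_disjoint adm that by (simp add: orb_def)
  qed
  have "card code = (\<Sum>i\<in>I. card (orb i))"
    unfolding code_eq
  proof (rule card_UN_disjoint)
    show "\<forall>i\<in>I. \<forall>j\<in>I. i \<noteq> j \<longrightarrow> orb i \<inter> orb j = {}"
      using disjoint by blast
  qed (simp_all add: I_def)
  also have "\<dots> = (\<Sum>i\<in>I. (q ^ n - 1) div (q - 1))"
  proof (rule sum.cong)
    fix i assume "i \<in> I"
    then obtain \<tau> \<delta> l where "i = (\<tau>, \<delta>, l)" "admissible \<tau> \<delta> l"
      using adm by (cases i) auto
    hence orb_card: "card (orb i) * (q - 1) = q ^ n - 1"
      using card_orbit_U_sub by (simp add: orb_def)
    have "q - 1 \<noteq> 0"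
      using q_ge_2 by simp
    thus "card (orb i) = (q ^ n - 1) div (q - 1)"
      unfolding orb_card[symmetric] by simp
  qed simp
  also have "\<dots> = card I * ((q ^ n - 1) div (q - 1))"
    by simp
  also have "card I = (q - 1) * (q ^ k - 1) * e"
    using card_T card_K subfld_zero by (simp add: I_def card_cartesian_product)
  also have "(q - 1) * (q ^ k - 1) * e * ((q ^ n - 1) div (q - 1))
      = e * (q ^ k - 1) * ((q - 1) * ((q ^ n - 1) div (q - 1)))"
    by (simp only: mult_ac)
  also have "(q - 1) * ((q ^ n - 1) div (q - 1)) = q ^ n - 1"
    using diff_one_dvd_power_diff_one[of q n] q_ge_2 by simp
  finally show ?thesis .
qed

lemma card_U_coeff_roots_le:
  assumes "\<tau> \<noteq> 0" "u \<noteq> 0"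
  shows "card {a. U_coeff \<tau> 1 (a * u) = 0} \<le> q"
proof -
  have "{a. U_coeff \<tau> 1 (a * u) = 0} = {a. (\<tau> * u ^ q) * a ^ q + u * a = 0}"
    by (simp add: U_coeff_def power_mult_distrib algebra_simps)
  thus ?thesis
    using card_roots_binomial_le[where c = "\<tau> * u ^ q" and d = u and N = q] assms q_ge_2 by simp
qed

lemma exists_scalars_off_roots:
  assumes "\<tau> \<noteq> 0"
  obtains u \<alpha> where "u \<in> K" "\<alpha> \<in> K" "\<alpha> \<notin> Fq" "U_coeff \<tau> 1 u \<noteq> 0" "U_coeff \<tau> 1 (\<alpha> * u) \<noteq> 0"
proof -
  have "\<not> K \<subseteq> {a. U_coeff \<tau> 1 (a * 1) = 0}"
  proof
    assume "K \<subseteq> {a. U_coeff \<tau> 1 (a * 1) = 0}"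
    hence "card K \<le> q"
      using card_mono[OF finite] card_U_coeff_roots_le[OF assms one_neq_zero] le_trans by blast
    thus False
      using card_K q_less_q_power_k by simp
  qed
  then obtain u where "u \<in> K" "U_coeff \<tau> 1 u \<noteq> 0"
    by auto
  hence "u \<noteq> 0"
    using q_ge_2 by (auto simp: U_coeff_def)
  define Y where "Y = {a. U_coeff \<tau> 1 (a * u) = 0}"
  have "0 \<in> Fq \<inter> Y"
    using subfld_zero[of 1] q_ge_2 by (simp add: Y_def U_coeff_def)
  hence "Fq \<inter> Y \<noteq> {}"
    by blast
  hence "card (Fq \<inter> Y) > 0"
    by (simp add: card_gt_0_iff)
  moreover have "card (Fq \<union> Y) + card (Fq \<inter> Y) = q + card Y"
    using card_Un_Int[of Fq Y] card_Fq by simp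
  moreover have "card Y \<le> q"
    unfolding Y_def using card_U_coeff_roots_le[OF assms \<open>u \<noteq> 0\<close>] .
  moreover have "q * q \<le> q ^ k"
    using power_increasing[of 2 k q] k_ge_2 q_ge_2 by (simp add: power2_eq_square)
  moreover have "2 * q \<le> q * q"
    using q_ge_2 by simp
  ultimately have "card (Fq \<union> Y) < card K"
    using card_K by linarith
  have "\<not> K \<subseteq> Fq \<union> Y"
  proof
    assume "K \<subseteq> Fq \<union> Y"
    hence "card K \<le> card (Fq \<union> Y)"
      by (rule card_mono[OF finite])
    thus False
      using \<open>card (Fq \<union> Y) < card K\<close> by simp
  qed
  then obtain \<alpha> where "\<alpha> \<in> K" "\<alpha> \<notin> Fq" "\<alpha> \<notin> Y"
    by blast
  thus thesis
    using that \<open>u \<in> K\<close> \<open>U_coeff \<tau> 1 u \<noteq> 0\<close> by (simp add: Y_def)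
qed

text \<open>With this \<delta>, the point \<alpha> * U_map \<tau> 1 1 u of the shifted U_sub \<tau> 1 1 is
  U_map \<tau> \<delta> 1 (\<alpha> * u), so both subspaces contain the F_q-line through it.\<close>
lemma U_sub_shared_line:
  assumes "U_coeff \<tau> 1 (\<alpha> * u) \<noteq> 0" "u \<in> K" "\<alpha> \<in> K"
    and \<delta>_eq: "\<delta> = \<alpha> * U_coeff \<tau> 1 u / U_coeff \<tau> 1 (\<alpha> * u)"
  shows "(\<lambda>c. c * (\<alpha> * U_map \<tau> 1 1 u)) ` Fq
    \<subseteq> (\<lambda>x. \<alpha> * x) ` U_sub q k \<gamma> \<tau> 1 1 \<inter> U_sub q k \<gamma> \<tau> \<delta> 1"
proof
  fix x assume "x \<in> (\<lambda>c. c * (\<alpha> * U_map \<tau> 1 1 u)) ` Fq"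
  then obtain c where "c \<in> Fq" and x: "x = c * (\<alpha> * U_map \<tau> 1 1 u)"
    by blast
  hence "c * u \<in> K" "c * (\<alpha> * u) \<in> K"
    using assms(2,3) subfld_1_subset by (blast intro: subfld_mult)+
  have "U_coeff \<tau> \<delta> (\<alpha> * u) = U_coeff \<tau> 1 (\<alpha> * u) * \<delta>"
    by (simp add: U_coeff_def)
  also have "\<dots> = \<alpha> * U_coeff \<tau> 1 u"
    using assms(1) unfolding \<delta>_eq by simp
  finally have "U_map \<tau> \<delta> 1 (\<alpha> * u) = \<alpha> * U_map \<tau> 1 1 u"
    by (simp add: U_map_def algebra_simps)
  hence in_V: "c * (\<alpha> * U_map \<tau> 1 1 u) = U_map \<tau> \<delta> 1 (c * (\<alpha> * u))"
    using U_map_mult[OF \<open>c \<in> Fq\<close>] by simp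
  have in_U: "c * (\<alpha> * U_map \<tau> 1 1 u) = \<alpha> * U_map \<tau> 1 1 (c * u)"
    using U_map_mult[OF \<open>c \<in> Fq\<close>] by (simp add: mult.left_commute)
  have "x \<in> (\<lambda>x. \<alpha> * x) ` U_sub q k \<gamma> \<tau> 1 1"
    unfolding U_sub_eq_image x in_U using \<open>c * u \<in> K\<close> by (intro imageI)
  moreover have "x \<in> U_sub q k \<gamma> \<tau> \<delta> 1"
    unfolding U_sub_eq_image x in_V using \<open>c * (\<alpha> * u) \<in> K\<close> by (intro imageI)
  ultimately show "x \<in> (\<lambda>x. \<alpha> * x) ` U_sub q k \<gamma> \<tau> 1 1 \<inter> U_sub q k \<gamma> \<tau> \<delta> 1"
    by blast
qed

lemma T_nonempty: obtains \<tau> where "\<tau> \<in> T"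
proof -
  have "1 \<in> K - {0}"
    using subfld_one by simp
  hence "\<exists>!\<tau>. \<tau> \<in> T \<and> (\<exists>j::nat. 1 = \<tau> * (\<xi> ^ (q - 1)) ^ j)"
    using T_coset_reps by blast
  thus thesis
    using that by (blast dest: ex1_implies_ex)
qed

lemma subspace_dist_code_eq:
  assumes "U \<in> code" "V \<in> code" "card (U \<inter> V) = q"
  shows "subspace_dist q U V = 2 * int k - 2"
proof -
  have "fq_subspace q (U \<inter> V)"
    using code_subspace(1)[OF assms(1)] code_subspace(1)[OF assms(2)] by (rule fq_subspace_Int)
  hence "fq_dim q (U \<inter> V) = 1"
    using assms(3) by (intro fq_dim_eqI) simp_all
  thus ?thesis
    using code_subspace(2)[OF assms(1)] code_subspace(2)[OF assms(2)]
    by (simp add: subspace_dist_def)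
qed

lemma code_dist_attained: "\<exists>U\<in>code. \<exists>V\<in>code. U \<noteq> V \<and> subspace_dist q U V = 2 * int k - 2"
proof -
  obtain \<tau> where "\<tau> \<in> T"
    using T_nonempty .
  hence "\<tau> \<in> K" "\<tau> \<noteq> 0"
    using T_subset by auto
  obtain u \<alpha> where u\<alpha>: "u \<in> K" "\<alpha> \<in> K" "\<alpha> \<notin> Fq" "U_coeff \<tau> 1 u \<noteq> 0" "U_coeff \<tau> 1 (\<alpha> * u) \<noteq> 0"
    using exists_scalars_off_roots[OF \<open>\<tau> \<noteq> 0\<close>] .
  define \<delta> where "\<delta> = \<alpha> * U_coeff \<tau> 1 u / U_coeff \<tau> 1 (\<alpha> * u)"
  have "\<alpha> \<noteq> 0"
    using u\<alpha>(3) subfld_zero by auto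
  moreover have "U_coeff \<tau> 1 u \<in> K" "U_coeff \<tau> 1 (\<alpha> * u) \<in> K"
    using U_coeff_in_K \<open>\<tau> \<in> K\<close> subfld_one u\<alpha>(1,2) subfld_mult by blast+
  ultimately have "\<delta> \<in> K - {0}"
    using u\<alpha>(2,4,5) unfolding \<delta>_def by (simp add: subfld_mult subfld_divide)
  hence adm: "admissible \<tau> 1 1" "admissible \<tau> \<delta> 1"
    using \<open>\<tau> \<in> T\<close> e_ge_1 subfld_one by (auto simp: admissible_def)
  define U where "U = (\<lambda>x. \<alpha> * x) ` U_sub q k \<gamma> \<tau> 1 1"
  define V where "V = U_sub q k \<gamma> \<tau> \<delta> 1"
  have "U \<in> code" "V \<in> code"
    unfolding U_def V_def
    using image_mult_U_sub_in_code[OF adm(1) \<open>\<alpha> \<noteq> 0\<close>] U_sub_in_code[OF adm(2)] .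
  moreover have "U \<noteq> V"
    using image_mult_U_sub_eq_imp[OF adm \<open>\<alpha> \<noteq> 0\<close>] u\<alpha>(3) unfolding U_def V_def by blast
  moreover have "card (U \<inter> V) = q"
  proof (rule antisym)
    show "card (U \<inter> V) \<le> q"
      using card_code_Int_le \<open>U \<in> code\<close> \<open>V \<in> code\<close> \<open>U \<noteq> V\<close> .
    have "\<alpha> * U_map \<tau> 1 1 u \<noteq> 0"
      using U_map_eq_0_iff[OF adm(1) u\<alpha>(1)] \<open>\<alpha> \<noteq> 0\<close> u\<alpha>(4) q_ge_2
      by (auto simp: U_coeff_def)
    hence "q = card ((\<lambda>c. c * (\<alpha> * U_map \<tau> 1 1 u)) ` Fq)"
      by (rule card_fq_line[symmetric])
    also have "\<dots> \<le> card (U \<inter> V)"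
      unfolding U_def V_def by (rule card_mono[OF finite U_sub_shared_line[OF u\<alpha>(5,1,2) \<delta>_def]])
    finally show "q \<le> card (U \<inter> V)" .
  qed
  ultimately show ?thesis
    using subspace_dist_code_eq by blast
qed

end


theorem lemma3p1:
  fixes q k r n e :: nat and \<xi> \<gamma> :: "'a::{field,finite}" and T :: "'a set"
  assumes q_pp: "\<exists>p m. prime p \<and> m > 0 \<and> q = p ^ m"
    and k2: "k \<ge> 2" and r2: "r > 2" and n_def: "n = r * k"
    and card_F: "card (UNIV :: 'a set) = q ^ n"
    and e_def: "e = nat \<lceil>real r / 2\<rceil> - 1"
    and xi_prim: "\<xi> \<in> subfld q k" "\<xi> \<noteq> 0"
        "\<forall>j. 0 < j \<and> j < q ^ k - 1 \<longrightarrow> \<xi> ^ j \<noteq> 1"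
    and T_reps: "T \<subseteq> subfld q k - {0}"
        "\<forall>x \<in> subfld q k - {0}. \<exists>!\<tau>. \<tau> \<in> T \<and> (\<exists>j::nat. x = \<tau> * (\<xi> ^ (q - 1)) ^ j)"
    and gamma: "\<exists>f. irreducible_over (subfld q k) f \<and> degree f = r \<and> poly f \<gamma> = 0"
  defines "C \<equiv> \<Union>{orbit (U_sub q k \<gamma> \<tau> \<delta> l) | \<tau> \<delta> l.
                      \<tau> \<in> T \<and> \<delta> \<in> subfld q k - {0} \<and> l \<in> {1..e}}"
  shows "(\<forall>U\<in>C. fq_subspace q U \<and> fq_dim q U = k)
         \<and> (\<forall>U\<in>C. \<forall>\<alpha>. \<alpha> \<noteq> 0 \<longrightarrow> (\<lambda>x. \<alpha> * x) ` U \<in> C)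
         \<and> card C = e * (q ^ k - 1) * (q ^ n - 1)
         \<and> (\<forall>U\<in>C. \<forall>V\<in>C. U \<noteq> V \<longrightarrow> subspace_dist q U V \<ge> 2 * int k - 2)
         \<and> (\<exists>U\<in>C. \<exists>V\<in>C. U \<noteq> V \<and> subspace_dist q U V = 2 * int k - 2)"
proof -
  obtain p m where "prime p" "m > 0" "q = p ^ m"
    using q_pp by blast
  then interpret cyclic_orbit_code q k r n e p m \<xi> \<gamma> T
    by unfold_locales (assumption | rule k2 r2 n_def card_F e_def xi_prim T_reps gamma)+
  have "C = code"
    unfolding C_def code_def ..
  show ?thesis
    unfolding \<open>C = code\<close>
  proof (intro conjI ballI allI impI)
    fix U assume "U \<in> code"
    thus "fq_subspace q U" "fq_dim q U = k"
      by (rule code_subspace)+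
  next
    fix U and \<alpha> :: 'a
    assume "U \<in> code" "\<alpha> \<noteq> 0"
    thus "(\<lambda>x. \<alpha> * x) ` U \<in> code"
      by (rule code_image_mult)
  next
    fix U V assume "U \<in> code" "V \<in> code" "U \<noteq> V"
    thus "subspace_dist q U V \<ge> 2 * int k - 2"
      by (rule code_dist_ge)
  qed (fact card_code code_dist_attained)+
qed

end
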